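(* Assume $\gamma\|A\|^2<1$ and $\gamma\|A+\bar A\|^2<1$. If $(u_1,u_2)\in\mathcal U^{open}_{ad}$ is an open-loop Nash equilibrium for the zero-sum game and $p$ is the corresponding adjoint process, then for all $t\ge0$, $\mathbb P$-almost surely, $$B_1^\top p_t+2R_1u_{1,t}+\bar B_1^\top\bar p_t+2\bar R_1\bar u_{1,t}=0,\qquad B_2^\top p_t-2R_2u_{2,t}+\bar B_2^\top\bar p_t-2\bar R_2\bar u_{2,t}=0.$$
   Context: Fix integers $d,\ell\ge 1$, $\gamma\in(0,1]$, matrices $A,\bar A\in\mathbb R^{d\times d}$, $B_1,\bar B_1,B_2,\bar B_2\in\mathbb R^{d\times \ell}$, symmetric $Q,\bar Q\in\mathbb R^{d\times d}$, symmetric $R_1,\bar R_1,R_2,\bar R_2\in\mathbb R^{\ell\times\ell}$ with $R_i$, $R_i+\bar R_i$ positive definite. Probability space $(\Omega,\mathcal F,\mathbb P)=(\Omega^0\times\Omega^1,\mathcal F^0\otimes\mathcal F^1,\mathbb P^0\otimes\mathbb P^1)$; noises $\epsilon^0_t(\omega)=\tilde\epsilon^0_t(\omega^0)$, $\epsilon^1_t(\omega)=\tilde\epsilon^1_t(\omega^1)$, $t\ge0$, with $(\tilde\epsilon^j_t)_{t\ge1}$ i.i.d. mean-zero square integrable in $\mathbb R^d$ and $\tilde\epsilon^j_0\sim\mu^j_0$ (square integrable, mean zero) independent of them. $\mathcal F_t=\sigma(\epsilon^0_s,\epsilon^1_s:s\le t)$; $\bar\xi=\mathbb E[\xi\mid\mathcal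 F^0]$. $\mathcal U$ ($\mathcal X$): $\mathbb R^\ell$- ($\mathbb R^d$-)valued adapted processes with $\mathbb E[\sup_{t\le T}\gamma^t\|u_t\|^2]<\infty$ for all $T$ and $\mathbb E\sum_t\gamma^t\|u_t\|^2<\infty$. State: $x_0=\epsilon^0_0+\epsilon^1_0$, $x_{t+1}=Ax_t+\bar A\bar x_t+B_1u_{1,t}+\bar B_1\bar u_{1,t}+B_2u_{2,t}+\bar B_2\bar u_{2,t}+\epsilon^0_{t+1}+\epsilon^1_{t+1}$; $\mathcal U^{open}_{ad}=\{(u_1,u_2)\in\mathcal U^2:x\in\mathcal X\}$. Utility $J(u_1,u_2)=\mathbb E\sum_{t\ge0}\gamma^tc_t$, $c_t=(x_t-\bar x_t)^\top Q(x_t-\bar x_t)+\bar x_t^\top(Q+\bar Q)\bar x_t+(u_{1,t}-\bar u_{1,t})^\top R_1(u_{1,t}-\bar u_{1,t})+\bar u_{1,t}^\top(R_1+\bar R_1)\bar u_{1,t}-(u_{2,t}-\bar u_{2,t})^\top R_2(u_{2,t}-\bar u_{2,t})-\bar u_{2,t}^\top(R_2+\bar R_2)\bar u_{2,t}$. An open-loop Nash equilibrium is $(u_1,u_2)\in\mathcal U^{open}_{ad}$ with $J(u_1,u_2')\le J(u_1,u_2)\le J(u_1',u_2)$ for all $u_1',u_2'\in\mathcal U$. An adjoint process is an $\mathbb R^d$-valued adapted $p$ with $p_t=\gamma\mathbb E[A^\top p_{t+1}+2Qx_{t+1}+\bar A^\top\bar p_{t+1}+2\bar Q\bar x_{t+1}\mid\mathcal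 F_t]$ for all $t\ge 0$. *)

theory Defs
  imports "HOL-Probability.Probability"
begin

definition mat_norm :: "real^'n^'m \<Rightarrow> real" where
  "mat_norm A = onorm (\<lambda>x. A *v x)"

definition pos_def :: "real^'n^'n \<Rightarrow> bool" where
  "pos_def R \<longleftrightarrow> (\<forall>v. v \<noteq> 0 \<longrightarrow> v \<bullet> (R *v v) > 0)"

definition symm :: "real^'n^'n \<Rightarrow> bool" where
  "symm R \<longleftrightarrow> transpose R = R"

definition vcond_exp :: "'w measure \<Rightarrow> 'w measure \<Rightarrow> ('w \<Rightarrow> real^'k) \<Rightarrow> 'w \<Rightarrow> real^'k" where
  "vcond_exp M F X = (\<lambda>w. \<chi> i. real_cond_exp M F (\<lambda>v. X v $ i) w)"

definition noise_assm :: "'a measure \<Rightarrow> (nat \<Rightarrow> 'a \<Rightarrow> real^'d) \<Rightarrow> bool" where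
  "noise_assm M e \<longleftrightarrow> prob_space M \<and>
     (\<forall>t. e t \<in> borel_measurable M) \<and>
     prob_space.indep_vars M (\<lambda>_. borel) e UNIV \<and>
     (\<forall>t\<ge>1. distr M borel (e t) = distr M borel (e 1)) \<and>
     (\<forall>t. integrable M (e t) \<and> integral\<^sup>L M (e t) = 0) \<and>
     (\<forall>t. integrable M (\<lambda>w. (norm (e t w))\<^sup>2))"

definition F0 :: "'a measure \<Rightarrow> 'b measure \<Rightarrow> ('a \<times> 'b) measure" where
  "F0 M0 M1 = vimage_algebra (space (M0 \<Otimes>\<^sub>M M1)) fst M0"

definition filt :: "'a measure \<Rightarrow> 'b measure \<Rightarrow> (nat \<Rightarrow> 'a \<Rightarrow> real^'d) \<Rightarrow> (nat \<Rightarrow> 'b \<Rightarrow> real^'d)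
    \<Rightarrow> nat \<Rightarrow> ('a \<times> 'b) measure" where
  "filt M0 M1 e0 e1 t = sigma (space (M0 \<Otimes>\<^sub>M M1))
     ((\<Union>s\<in>{..t}. {(\<lambda>w. e0 s (fst w)) -` B \<inter> space (M0 \<Otimes>\<^sub>M M1) | B. B \<in> sets borel}) \<union>
      (\<Union>s\<in>{..t}. {(\<lambda>w. e1 s (snd w)) -` B \<inter> space (M0 \<Otimes>\<^sub>M M1) | B. B \<in> sets borel}))"

definition proc_class :: "'w measure \<Rightarrow> (nat \<Rightarrow> 'w measure) \<Rightarrow> real \<Rightarrow> (nat \<Rightarrow> 'w \<Rightarrow> real^'k) \<Rightarrow> bool" where
  "proc_class M F \<gamma> u \<longleftrightarrow>
     (\<forall>t. u t \<in> borel_measurable (F t)) \<and>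
     (\<forall>T. (\<integral>\<^sup>+ w. ennreal (Max {\<gamma>^t * (norm (u t w))\<^sup>2 | t. t \<le> T}) \<partial>M) < \<infinity>) \<and>
     (\<integral>\<^sup>+ w. (\<Sum>t. ennreal (\<gamma>^t * (norm (u t w))\<^sup>2)) \<partial>M) < \<infinity>"

primrec state ::
  "'w measure \<Rightarrow> 'w measure \<Rightarrow> (nat \<Rightarrow> 'w \<Rightarrow> real^'d) \<Rightarrow>
   real^'d^'d \<Rightarrow> real^'d^'d \<Rightarrow> real^'l^'d \<Rightarrow> real^'l^'d \<Rightarrow> real^'l^'d \<Rightarrow> real^'l^'d \<Rightarrow>
   (nat \<Rightarrow> 'w \<Rightarrow> real^'l) \<Rightarrow> (nat \<Rightarrow> 'w \<Rightarrow> real^'l) \<Rightarrow> nat \<Rightarrow> 'w \<Rightarrow> real^'d" where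
  "state M G eps A Ab B1 Bb1 B2 Bb2 u1 u2 0 = eps 0"
| "state M G eps A Ab B1 Bb1 B2 Bb2 u1 u2 (Suc t) =
     (\<lambda>w. A *v state M G eps A Ab B1 Bb1 B2 Bb2 u1 u2 t w
        + Ab *v vcond_exp M G (state M G eps A Ab B1 Bb1 B2 Bb2 u1 u2 t) w
        + B1 *v u1 t w + Bb1 *v vcond_exp M G (u1 t) w
        + B2 *v u2 t w + Bb2 *v vcond_exp M G (u2 t) w
        + eps (Suc t) w)"

definition run_cost ::
  "'w measure \<Rightarrow> 'w measure \<Rightarrow> real^'d^'d \<Rightarrow> real^'d^'d \<Rightarrow> real^'l^'l \<Rightarrow> real^'l^'l \<Rightarrow>
   real^'l^'l \<Rightarrow> real^'l^'l \<Rightarrow> ('w \<Rightarrow> real^'d) \<Rightarrow> ('w \<Rightarrow> real^'l) \<Rightarrow> ('w \<Rightarrow> real^'l) \<Rightarrow> 'w \<Rightarrow> real" where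
  "run_cost M G Q Qb R1 Rb1 R2 Rb2 x v1 v2 w =
     (let xb = vcond_exp M G x w; v1b = vcond_exp M G v1 w; v2b = vcond_exp M G v2 w in
       (x w - xb) \<bullet> (Q *v (x w - xb)) + xb \<bullet> ((Q + Qb) *v xb)
     + (v1 w - v1b) \<bullet> (R1 *v (v1 w - v1b)) + v1b \<bullet> ((R1 + Rb1) *v v1b)
     - (v2 w - v2b) \<bullet> (R2 *v (v2 w - v2b)) - v2b \<bullet> ((R2 + Rb2) *v v2b))"

end

(*
  Perturb one player's control by c v at a single time s, with v an F_s-measurable direction.
  The state is affine in the controls, so the cost J is a quadratic polynomial in c, and the
  saddle-point inequalities force its linear coefficient to vanish. Pairing the state response
  with the adjoint equation and summing by parts identifies this coefficient as
  gamma^s E[g_s . v], where g_s is the left-hand side of the claimed identity; the boundary term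
  vanishes because p and the response are discounted square summable, which is where
  gamma ||A||^2 < 1 and gamma ||A + Ab||^2 < 1 enter. On the product space, conditioning on the
  common noise preserves F_s-measurability, so g_s itself is an admissible direction, and v = g_s
  gives E |g_s|^2 = 0.
*)

theory Submission
  imports Defs
begin

lemma borel_measurable_bounded_linear:
  "bounded_linear T \<Longrightarrow> f \<in> borel_measurable N \<Longrightarrow> (\<lambda>w. T (f w)) \<in> borel_measurable N"
  by (rule borel_measurable_continuous_on[OF linear_continuous_on])

lemma borel_measurable_matrix_vector_mult [measurable (raw)]:
  "f \<in> borel_measurable N \<Longrightarrow> (\<lambda>w. (A::real^'n^'m) *v f w) \<in> borel_measurable N"
  using borel_measurable_bounded_linear[OF matrix_vector_mul_bounded_linear] .

lemma borel_measurable_vec_nth [measurable (raw)]: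
  "f \<in> borel_measurable N \<Longrightarrow> (\<lambda>w. (f w :: real^'n) $ i) \<in> borel_measurable N"
  using borel_measurable_bounded_linear[OF bounded_linear_vec_nth] .

lemma borel_measurable_vec_iff:
  "(f :: 'w \<Rightarrow> real^'k) \<in> borel_measurable N \<longleftrightarrow> (\<forall>i. (\<lambda>w. f w $ i) \<in> borel_measurable N)"
proof
  assume "\<forall>i. (\<lambda>w. f w $ i) \<in> borel_measurable N"
  then show "f \<in> borel_measurable N"
    by (subst borel_measurable_euclidean_space) (auto simp: Basis_vec_def inner_axis)
qed measurable

lemma norm_sq_vec_eq_sum: "(norm (x::real^'k))\<^sup>2 = (\<Sum>i\<in>UNIV. (x$i)\<^sup>2)"
  by (simp only: power2_norm_eq_inner inner_vec_def) (simp add: power2_eq_square)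

lemma norm_add_sq_le: "(norm (x + y))\<^sup>2 \<le> 2 * (norm x)\<^sup>2 + 2 * (norm (y::'a::real_normed_vector))\<^sup>2"
proof -
  have "(norm (x + y))\<^sup>2 \<le> (norm x + norm y)\<^sup>2"
    by (simp add: norm_triangle_ineq power_mono)
  also have "\<dots> \<le> 2 * (norm x)\<^sup>2 + 2 * (norm y)\<^sup>2"
    using power2_sum[of "norm x" "norm y"] sum_squares_bound[of "norm x" "norm y"] by linarith
  finally show ?thesis .
qed

lemma abs_inner_le_norm_sq_add: "\<bar>x \<bullet> y\<bar> \<le> (norm x)\<^sup>2 + (norm (y::'a::real_inner))\<^sup>2"
  using Cauchy_Schwarz_ineq2[of x y] sum_squares_bound[of "norm x" "norm y"]
    mult_nonneg_nonneg[OF norm_ge_zero norm_ge_zero, of x y] by linarith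

lemma mat_norm_nonneg: "0 \<le> mat_norm (A::real^'n^'m)"
  unfolding mat_norm_def using onorm_pos_le[OF matrix_vector_mul_bounded_linear[of A]] .

lemma norm_matrix_vector_mult_le: "norm (A *v x) \<le> mat_norm A * norm x"
  for A :: "real^'n^'m"
  unfolding mat_norm_def using onorm[OF matrix_vector_mul_bounded_linear[of A]] .

lemma norm_matrix_vector_mult_sq_le: "(norm (A *v x))\<^sup>2 \<le> (mat_norm A)\<^sup>2 * (norm x)\<^sup>2"
  for A :: "real^'n^'m"
  by (metis norm_matrix_vector_mult_le norm_ge_zero power_mono power_mult_distrib)

lemma abs_inner_matrix_vector_mult_le:
  "\<bar>a \<bullet> (S *v b)\<bar> \<le> mat_norm S * ((norm a)\<^sup>2 + (norm b)\<^sup>2)"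
  for S :: "real^'n^'m"
proof -
  have "\<bar>a \<bullet> (S *v b)\<bar> \<le> norm a * (mat_norm S * norm b)"
    by (rule order_trans[OF Cauchy_Schwarz_ineq2 mult_left_mono[OF norm_matrix_vector_mult_le]]) simp
  also have "\<dots> = mat_norm S * \<bar>norm a \<bullet> norm b\<bar>" by simp
  also have "\<dots> \<le> mat_norm S * ((norm a)\<^sup>2 + (norm b)\<^sup>2)"
    using abs_inner_le_norm_sq_add[of "norm a" "norm b"] by (intro mult_left_mono mat_norm_nonneg) simp_all
  finally show ?thesis .
qed

lemma symm_inner_commute: "symm P \<Longrightarrow> x \<bullet> (P *v y) = y \<bullet> (P *v x)"
  for P :: "real^'n^'n"
  by (metis dot_lmul_matrix inner_commute symm_def vector_transpose_matrix)

lemma symm_add: "symm P \<Longrightarrow> symm Pb \<Longrightarrow> symm (P + Pb)"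
  unfolding symm_def by (simp add: transpose_def vec_eq_iff)

lemma AE_norm_sq_iterate_le:
  fixes y :: "nat \<Rightarrow> 'w \<Rightarrow> real^'n" and S :: "real^'n^'n"
  assumes "\<And>k. AE w in M. y (Suc k) w = S *v y k w"
  shows "AE w in M. (norm (y k w))\<^sup>2 \<le> ((mat_norm S)\<^sup>2)^k * (norm (y 0 w))\<^sup>2"
proof (induction k)
  case (Suc k)
  from Suc.IH assms[of k] show ?case
  proof eventually_elim
    case (elim w)
    have "(norm (y (Suc k) w))\<^sup>2 \<le> (mat_norm S)\<^sup>2 * (norm (y k w))\<^sup>2"
      unfolding elim(2) by (rule norm_matrix_vector_mult_sq_le)
    also have "\<dots> \<le> (mat_norm S)\<^sup>2 * (((mat_norm S)\<^sup>2)^k * (norm (y 0 w))\<^sup>2)"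
      by (intro mult_left_mono elim(1)) simp
    finally show ?case by simp
  qed
qed simp

lemma nonneg_quadratic_imp_linear_zero:
  fixes L K :: real
  assumes "\<And>c. 0 \<le> c * L + c\<^sup>2 * K"
  shows "L = 0"
proof (rule ccontr)
  assume "L \<noteq> 0"
  define D where "D = \<bar>K\<bar> + 1"
  have D: "0 < D" "K \<le> D - 1" unfolding D_def by auto
  have "0 \<le> (- L / D) * L + (- L / D)\<^sup>2 * K" by (rule assms)
  also have "\<dots> = L\<^sup>2 * (K - D) / D\<^sup>2"
    using D by (simp add: field_simps power2_eq_square)
  also have "\<dots> < 0"
    using D \<open>L \<noteq> 0\<close> by (intro divide_neg_pos mult_pos_neg) auto
  finally show False by simp
qed

text \<open>It is applied with \<open>Y t\<close> the adjoint paired with the state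
  response, \<open>S t\<close> the derivative of the state cost and \<open>W t\<close> the direct effect of the impulse.\<close>

lemma discounted_telescoping_sums:
  fixes Y S W :: "nat \<Rightarrow> real" and \<gamma> :: real
  assumes step: "\<And>t. Y t + W t = \<gamma> * (Y (Suc t) + S (Suc t))"
    and "Y 0 = 0" "S 0 = 0"
    and boundary: "(\<lambda>n. \<gamma>^n * Y n) \<longlonglongrightarrow> 0"
    and W: "\<And>t. t \<noteq> s \<Longrightarrow> W t = 0"
  shows "(\<lambda>t. \<gamma>^t * S t) sums (\<gamma>^s * W s)"
proof -
  have partial: "(\<Sum>t<n. \<gamma>^t * W t) = \<gamma>^n * Y n + (\<Sum>t<Suc n. \<gamma>^t * S t)" for n
  proof (induction n)
    case (Suc n)
    have "(\<Sum>t<Suc n. \<gamma>^t * W t) = \<gamma>^n * (Y n + W n) + (\<Sum>t<Suc n. \<gamma>^t * S t)"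
      using Suc.IH by (simp add: algebra_simps)
    also have "\<dots> = \<gamma>^Suc n * Y (Suc n) + (\<Sum>t<Suc (Suc n). \<gamma>^t * S t)"
      unfolding step by (simp add: algebra_simps)
    finally show ?case .
  qed (simp add: assms(2,3))
  have W_sum: "(\<Sum>t<n. \<gamma>^t * W t) = \<gamma>^s * W s" if "s < n" for n
    using that W by (subst sum.mono_neutral_right[of "{..<n}" "{s}"]) auto
  have "\<forall>\<^sub>F n in sequentially. s < n" by (rule eventually_gt_at_top)
  then have "\<forall>\<^sub>F n in sequentially. \<gamma>^s * W s - \<gamma>^n * Y n = (\<Sum>t<Suc n. \<gamma>^t * S t)"
  proof eventually_elim
    case (elim n)
    show ?case using partial[of n] W_sum[OF elim] by linarith
  qed
  moreover have "(\<lambda>n. \<gamma>^s * W s - \<gamma>^n * Y n) \<longlonglongrightarrow> \<gamma>^s * W s"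
    using tendsto_diff[OF tendsto_const boundary] by simp
  ultimately have "(\<lambda>n. \<Sum>t<Suc n. \<gamma>^t * S t) \<longlonglongrightarrow> \<gamma>^s * W s"
    by (rule Lim_transform_eventually[rotated])
  then show ?thesis unfolding sums_def by (rule LIMSEQ_imp_Suc)
qed

section \<open>Square-integrable random vectors and conditional expectation\<close>

definition square_integrable :: "'w measure \<Rightarrow> ('w \<Rightarrow> 'b::real_normed_vector) \<Rightarrow> bool" where
  "square_integrable M f \<longleftrightarrow> f \<in> borel_measurable M \<and> integrable M (\<lambda>w. (norm (f w))\<^sup>2)"

lemma square_integrable_measurable: "square_integrable M f \<Longrightarrow> f \<in> borel_measurable M"
  and square_integrable_norm_sq: "square_integrable M f \<Longrightarrow> integrable M (\<lambda>w. (norm (f w))\<^sup>2)"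
  unfolding square_integrable_def by auto

lemma square_integrableI_bound:
  fixes f :: "'w \<Rightarrow> 'b::real_normed_vector"
  assumes "f \<in> borel_measurable M" "integrable M h" "\<And>w. (norm (f w))\<^sup>2 \<le> h w"
  shows "square_integrable M f"
  unfolding square_integrable_def
proof
  show "integrable M (\<lambda>w. (norm (f w))\<^sup>2)"
  proof (rule Bochner_Integration.integrable_bound[OF assms(2)])
    show "AE w in M. norm ((norm (f w))\<^sup>2) \<le> norm (h w)"
      using order_trans[OF assms(3) abs_ge_self] by (intro AE_I2) simp
  qed (use assms(1) in measurable)
qed (fact assms(1))

lemma square_integrable_add:
  fixes f g :: "'w \<Rightarrow> 'b::{banach, second_countable_topology}"
  assumes "square_integrable M f" "square_integrable M g"
  shows "square_integrable M (\<lambda>w. f w + g w)"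
  using assms norm_add_sq_le
  by (intro square_integrableI_bound[where h="\<lambda>w. 2 * (norm (f w))\<^sup>2 + 2 * (norm (g w))\<^sup>2"])
    (auto simp: square_integrable_def)

lemma square_integrable_scaleR:
  "square_integrable M f \<Longrightarrow> square_integrable M (\<lambda>w. c *\<^sub>R f w)"
  for f :: "'w \<Rightarrow> 'b::{banach, second_countable_topology}"
  by (auto simp: square_integrable_def power_mult_distrib)

lemma square_integrable_diff:
  fixes f g :: "'w \<Rightarrow> 'b::{banach, second_countable_topology}"
  assumes "square_integrable M f" "square_integrable M g"
  shows "square_integrable M (\<lambda>w. f w - g w)"
  using square_integrable_add[OF assms(1) square_integrable_scaleR[OF assms(2), of "-1"]] by simp

lemma square_integrable_zero: "square_integrable M (\<lambda>w. 0)"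
  by (simp add: square_integrable_def)

lemma square_integrable_matrix_vector_mult:
  fixes f :: "'w \<Rightarrow> real^'n" and A :: "real^'n^'m"
  assumes "square_integrable M f"
  shows "square_integrable M (\<lambda>w. A *v f w)"
  using assms norm_matrix_vector_mult_sq_le
  by (intro square_integrableI_bound[where h="\<lambda>w. (mat_norm A)\<^sup>2 * (norm (f w))\<^sup>2"])
    (auto simp: square_integrable_def)

lemma square_integrable_vec_nth:
  fixes f :: "'w \<Rightarrow> real^'k"
  assumes "square_integrable M f"
  shows "square_integrable M (\<lambda>w. f w $ i)"
  using assms
  by (intro square_integrableI_bound[where h="\<lambda>w. (norm (f w))\<^sup>2"])
    (auto simp: square_integrable_def abs_le_square_iff[symmetric] component_le_norm_cart)

lemma square_integrable_vec_iff:
  "square_integrable M f \<longleftrightarrow> (\<forall>i. square_integrable M (\<lambda>w. f w $ i))"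
  for f :: "'w \<Rightarrow> real^'k"
proof
  assume "\<forall>i. square_integrable M (\<lambda>w. f w $ i)"
  then show "square_integrable M f"
    by (auto simp: square_integrable_def norm_sq_vec_eq_sum borel_measurable_vec_iff)
qed (auto intro: square_integrable_vec_nth)

lemma integrable_inner_square_integrable:
  fixes f g :: "'w \<Rightarrow> 'b::{real_inner, banach, second_countable_topology}"
  assumes "square_integrable M f" "square_integrable M g"
  shows "integrable M (\<lambda>w. f w \<bullet> g w)"
proof (rule Bochner_Integration.integrable_bound[where f="\<lambda>w. (norm (f w))\<^sup>2 + (norm (g w))\<^sup>2"])
  show "AE w in M. norm (f w \<bullet> g w) \<le> norm ((norm (f w))\<^sup>2 + (norm (g w))\<^sup>2)"
    using abs_inner_le_norm_sq_add by (intro AE_I2) (simp add: order_trans[OF _ abs_ge_self])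
qed (use assms in \<open>auto simp: square_integrable_def\<close>)

lemma square_integrable_AE_cong:
  fixes f g :: "'w \<Rightarrow> 'b::{banach, second_countable_topology}"
  assumes "square_integrable M f" "g \<in> borel_measurable M" "AE w in M. f w = g w"
  shows "square_integrable M g"
proof -
  have "integrable M (\<lambda>w. (norm (g w))\<^sup>2)"
    by (rule integrable_cong_AE_imp[OF square_integrable_norm_sq[OF assms(1)]])
      (use assms in \<open>auto elim!: AE_mp\<close>)
  then show ?thesis using assms by (simp add: square_integrable_def)
qed

lemma (in finite_measure) square_integrable_integrable:
  fixes f :: "'a \<Rightarrow> 'b::{banach, second_countable_topology}"
  assumes "square_integrable M f"
  shows "integrable M f"
proof (rule Bochner_Integration.integrable_bound[where f="\<lambda>w. 1 + (norm (f w))\<^sup>2"])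
  have "norm x \<le> 1 + (norm x)\<^sup>2" for x :: 'b
    using sum_squares_bound[of 1 "norm x"] norm_ge_zero[of x] unfolding power2_eq_square by linarith
  then show "AE x in M. norm (f x) \<le> norm (1 + (norm (f x))\<^sup>2)"
    by (intro AE_I2) (simp add: add_nonneg_nonneg)
qed (use assms in \<open>auto simp: square_integrable_def\<close>)

lemma borel_measurable_vcond_exp [measurable]: "vcond_exp M F f \<in> borel_measurable F"
  unfolding vcond_exp_def by (subst borel_measurable_vec_iff) simp

lemma borel_measurable_vcond_exp2 [measurable]: "vcond_exp M F f \<in> borel_measurable M"
  unfolding vcond_exp_def by (subst borel_measurable_vec_iff) simp

lemma vcond_exp_nth: "vcond_exp M F f w $ i = real_cond_exp M F (\<lambda>v. f v $ i) w"
  unfolding vcond_exp_def by simp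

lemma AE_vec_eqI:
  fixes f g :: "'w \<Rightarrow> real^'k"
  assumes "\<And>i. AE w in M. f w $ i = g w $ i"
  shows "AE w in M. f w = g w"
proof -
  have "AE w in M. \<forall>i\<in>UNIV. f w $ i = g w $ i"
    by (rule AE_finite_allI) (use assms in auto)
  then show ?thesis by (auto simp: vec_eq_iff)
qed

context finite_measure_subalgebra
begin

lemma square_integrable_real_cond_exp:
  fixes g :: "'a \<Rightarrow> real"
  assumes g: "square_integrable M g"
  shows "square_integrable M (real_cond_exp M F g)"
    and "(\<integral>w. (real_cond_exp M F g w)\<^sup>2 \<partial>M) \<le> (\<integral>w. (g w)\<^sup>2 \<partial>M)"
proof -
  have ig: "integrable M g" using square_integrable_integrable[OF g] .
  have ig2: "integrable M (\<lambda>w. (g w)\<^sup>2)" using square_integrable_norm_sq[OF g] by simp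
  have cv: "convex_on UNIV (\<lambda>x::real. x\<^sup>2)" using convex_power2 by simp
  have jensen: "AE x in M. (real_cond_exp M F g x)\<^sup>2 \<le> real_cond_exp M F (\<lambda>x. (g x)\<^sup>2) x"
    using real_cond_exp_jensens_inequality(2)[OF ig _ _ ig2 cv, of 0 0] by auto
  have int: "integrable M (\<lambda>x. (real_cond_exp M F g x)\<^sup>2)"
    using integrable_convex_cond_exp[OF ig _ _ ig2 cv, of 0 0] by auto
  then show "square_integrable M (real_cond_exp M F g)" by (simp add: square_integrable_def)
  have "(\<integral>w. (real_cond_exp M F g w)\<^sup>2 \<partial>M) \<le> (\<integral>w. real_cond_exp M F (\<lambda>x. (g x)\<^sup>2) w \<partial>M)"
    by (rule integral_mono_AE[OF int real_cond_exp_int(1)[OF ig2] jensen])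
  also have "\<dots> = (\<integral>w. (g w)\<^sup>2 \<partial>M)" by (rule real_cond_exp_int(2)[OF ig2])
  finally show "(\<integral>w. (real_cond_exp M F g w)\<^sup>2 \<partial>M) \<le> (\<integral>w. (g w)\<^sup>2 \<partial>M)" .
qed

lemma integrable_vec_nth_square_integrable:
  "square_integrable M f \<Longrightarrow> integrable M (\<lambda>w. (f w :: real^'k) $ i)"
  by (intro square_integrable_integrable square_integrable_vec_nth)

lemma square_integrable_vcond_exp:
  fixes f :: "'a \<Rightarrow> real^'k"
  assumes "square_integrable M f"
  shows "square_integrable M (vcond_exp M F f)"
  unfolding square_integrable_vec_iff[of _ "vcond_exp M F f"] vcond_exp_nth
  using square_integrable_real_cond_exp(1)[OF square_integrable_vec_nth[OF assms]] by simp

lemma integral_norm_sq_vcond_exp_le: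
  fixes f :: "'a \<Rightarrow> real^'k"
  assumes f: "square_integrable M f"
  shows "(\<integral>w. (norm (vcond_exp M F f w))\<^sup>2 \<partial>M) \<le> (\<integral>w. (norm (f w))\<^sup>2 \<partial>M)"
proof -
  note c = square_integrable_vec_nth[OF f]
  have "(\<integral>w. (norm (vcond_exp M F f w))\<^sup>2 \<partial>M)
      = (\<Sum>i\<in>UNIV. (\<integral>w. (real_cond_exp M F (\<lambda>v. f v $ i) w)\<^sup>2 \<partial>M))"
    unfolding norm_sq_vec_eq_sum vcond_exp_nth
    by (rule Bochner_Integration.integral_sum)
      (use square_integrable_real_cond_exp(1)[OF c] in \<open>simp add: square_integrable_def\<close>)
  also have "\<dots> \<le> (\<Sum>i\<in>UNIV. (\<integral>w. (f w $ i)\<^sup>2 \<partial>M))"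
    by (rule sum_mono) (rule square_integrable_real_cond_exp(2)[OF c])
  also have "\<dots> = (\<integral>w. (norm (f w))\<^sup>2 \<partial>M)"
    unfolding norm_sq_vec_eq_sum
    by (rule Bochner_Integration.integral_sum[symmetric]) (use c in \<open>simp add: square_integrable_def\<close>)
  finally show ?thesis .
qed

lemma vcond_exp_AE_cong:
  fixes f g :: "'a \<Rightarrow> real^'k"
  assumes "AE w in M. f w = g w" "f \<in> borel_measurable M" "g \<in> borel_measurable M"
  shows "AE w in M. vcond_exp M F f w = vcond_exp M F g w"
proof (rule AE_vec_eqI)
  fix i
  have "AE w in M. f w $ i = g w $ i" using assms(1) by auto
  then show "AE w in M. vcond_exp M F f w $ i = vcond_exp M F g w $ i"
    unfolding vcond_exp_nth by (rule real_cond_exp_cong) (use assms in auto)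
qed

lemma vcond_exp_add:
  fixes f g :: "'a \<Rightarrow> real^'k"
  assumes "square_integrable M f" "square_integrable M g"
  shows "AE w in M. vcond_exp M F (\<lambda>w. f w + g w) w = vcond_exp M F f w + vcond_exp M F g w"
  by (rule AE_vec_eqI, unfold vcond_exp_nth vector_add_component, rule real_cond_exp_add)
    (use integrable_vec_nth_square_integrable assms in auto)

lemma vcond_exp_scaleR:
  fixes f :: "'a \<Rightarrow> real^'k"
  assumes "square_integrable M f"
  shows "AE w in M. vcond_exp M F (\<lambda>w. c *\<^sub>R f w) w = c *\<^sub>R vcond_exp M F f w"
  by (rule AE_vec_eqI, unfold vcond_exp_nth vector_scaleR_component real_scaleR_def,
      rule real_cond_exp_cmult)
    (use integrable_vec_nth_square_integrable assms in auto)

lemma vcond_exp_linear: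
  fixes f g h :: "'a \<Rightarrow> real^'k"
  assumes "square_integrable M f" "square_integrable M g" "h \<in> borel_measurable M"
    and "AE w in M. h w = f w + c *\<^sub>R g w"
  shows "AE w in M. vcond_exp M F h w = vcond_exp M F f w + c *\<^sub>R vcond_exp M F g w"
proof -
  have "AE w in M. vcond_exp M F h w = vcond_exp M F (\<lambda>w. f w + c *\<^sub>R g w) w"
    by (rule vcond_exp_AE_cong[OF assms(4) assms(3)])
      (use assms(1,2) in \<open>measurable, auto simp: square_integrable_def\<close>)
  with vcond_exp_add[OF assms(1) square_integrable_scaleR[OF assms(2)], of c]
    vcond_exp_scaleR[OF assms(2), of c]
  show ?thesis by eventually_elim simp
qed

lemma vcond_exp_matrix_vector_mult:
  fixes f :: "'a \<Rightarrow> real^'n" and A :: "real^'n^'m"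
  assumes "square_integrable M f"
  shows "AE w in M. vcond_exp M F (\<lambda>w. A *v f w) w = A *v vcond_exp M F f w"
proof (rule AE_vec_eqI)
  fix i
  have int: "\<And>j. integrable M (\<lambda>w. A $ i $ j * f w $ j)"
    using integrable_vec_nth_square_integrable[OF assms] by auto
  have "AE w in M. real_cond_exp M F (\<lambda>w. \<Sum>j\<in>UNIV. A $ i $ j * f w $ j) w
      = (\<Sum>j\<in>UNIV. real_cond_exp M F (\<lambda>w. A $ i $ j * f w $ j) w)"
    by (rule real_cond_exp_sum) (rule int)
  moreover have "AE w in M. \<forall>j\<in>UNIV. real_cond_exp M F (\<lambda>w. A $ i $ j * f w $ j) w
      = A $ i $ j * real_cond_exp M F (\<lambda>w. f w $ j) w"
    by (rule AE_finite_allI) (use integrable_vec_nth_square_integrable[OF assms] in auto)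
  ultimately show "AE w in M. vcond_exp M F (\<lambda>w. A *v f w) w $ i = (A *v vcond_exp M F f w) $ i"
    by (auto simp: matrix_vector_mult_def vcond_exp_nth)
qed

lemma vcond_exp_F_meas:
  fixes f :: "'a \<Rightarrow> real^'k"
  assumes "square_integrable M f" "f \<in> borel_measurable F"
  shows "AE w in M. vcond_exp M F f w = f w"
  by (rule AE_vec_eqI, unfold vcond_exp_nth, rule real_cond_exp_F_meas)
    (use integrable_vec_nth_square_integrable assms in auto)

lemma vcond_exp_zero: "AE w in M. vcond_exp M F (\<lambda>w. 0) w = (0 :: real^'k)"
  using vcond_exp_F_meas[OF square_integrable_zero] by simp

lemma integral_inner_vcond_exp_F_meas:
  fixes h g :: "'a \<Rightarrow> real^'k"
  assumes "square_integrable M h" "h \<in> borel_measurable F" "square_integrable M g"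
  shows "(\<integral>w. h w \<bullet> vcond_exp M F g w \<partial>M) = (\<integral>w. h w \<bullet> g w \<partial>M)"
proof -
  have hF: "\<And>i. (\<lambda>w. h w $ i) \<in> borel_measurable F" using assms(2) by measurable
  have int: "\<And>i. integrable M (\<lambda>w. h w $ i * g w $ i)"
    "\<And>i. integrable M (\<lambda>w. h w $ i * real_cond_exp M F (\<lambda>v. g v $ i) w)"
    using integrable_inner_square_integrable[OF square_integrable_vec_nth[OF assms(1)]]
      square_integrable_vec_nth[OF assms(3)]
      square_integrable_real_cond_exp(1)[OF square_integrable_vec_nth[OF assms(3)]] by auto
  have "(\<integral>w. h w \<bullet> vcond_exp M F g w \<partial>M)
      = (\<Sum>i\<in>UNIV. (\<integral>w. h w $ i * real_cond_exp M F (\<lambda>v. g v $ i) w \<partial>M))"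
    unfolding inner_vec_def vcond_exp_nth inner_real_def
    by (rule Bochner_Integration.integral_sum) (rule int(2))
  also have "\<dots> = (\<Sum>i\<in>UNIV. (\<integral>w. h w $ i * g w $ i \<partial>M))"
    by (rule sum.cong[OF refl], rule real_cond_exp_intg(2)[OF int(1) hF])
      (use square_integrable_measurable[OF assms(3)] in measurable)
  also have "\<dots> = (\<integral>w. h w \<bullet> g w \<partial>M)"
    unfolding inner_vec_def inner_real_def
    by (rule Bochner_Integration.integral_sum[symmetric]) (rule int(1))
  finally show ?thesis .
qed

lemma integral_inner_vcond_exp_sym:
  fixes f g :: "'a \<Rightarrow> real^'k"
  assumes "square_integrable M f" "square_integrable M g"
  shows "(\<integral>w. f w \<bullet> vcond_exp M F g w \<partial>M) = (\<integral>w. vcond_exp M F f w \<bullet> g w \<partial>M)"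
proof -
  have "(\<integral>w. f w \<bullet> vcond_exp M F g w \<partial>M) = (\<integral>w. vcond_exp M F g w \<bullet> vcond_exp M F f w \<partial>M)"
    using integral_inner_vcond_exp_F_meas[OF square_integrable_vcond_exp[OF assms(2)] _ assms(1)]
    by (simp add: inner_commute)
  also have "\<dots> = (\<integral>w. vcond_exp M F f w \<bullet> g w \<partial>M)"
    using integral_inner_vcond_exp_F_meas[OF square_integrable_vcond_exp[OF assms(1)] _ assms(2)]
    by (simp add: inner_commute)
  finally show ?thesis .
qed

lemma integral_inner_matrix_vcond_exp:
  fixes x :: "'a \<Rightarrow> real^'m" and y :: "'a \<Rightarrow> real^'n" and P :: "real^'n^'m"
  assumes "square_integrable M x" "square_integrable M y"
  shows "(\<integral>w. x w \<bullet> (P *v vcond_exp M F y w) \<partial>M) = (\<integral>w. vcond_exp M F x w \<bullet> (P *v y w) \<partial>M)"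
proof -
  have "(\<integral>w. x w \<bullet> (P *v vcond_exp M F y w) \<partial>M) = (\<integral>w. x w \<bullet> vcond_exp M F (\<lambda>w. P *v y w) w \<partial>M)"
    by (rule integral_cong_AE)
      (use vcond_exp_matrix_vector_mult[OF assms(2), of P] assms in
        \<open>auto simp: square_integrable_def\<close>)
  also have "\<dots> = (\<integral>w. vcond_exp M F x w \<bullet> (P *v y w) \<partial>M)"
    by (rule integral_inner_vcond_exp_sym[OF assms(1) square_integrable_matrix_vector_mult[OF assms(2)]])
  finally show ?thesis .
qed

end

section \<open>Discounted processes\<close>

lemma AE_summable_if_summable_integral:
  fixes b :: "nat \<Rightarrow> 'a \<Rightarrow> real"
  assumes b: "\<And>t. integrable M (b t)" "\<And>t w. 0 \<le> b t w"
    and summable: "summable (\<lambda>t. \<integral>w. b t w \<partial>M)"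
  shows "AE w in M. summable (\<lambda>t. b t w)"
proof -
  have [measurable]: "\<And>t. b t \<in> borel_measurable M" using b by auto
  have "(\<integral>\<^sup>+w. (\<Sum>t. ennreal (b t w)) \<partial>M) = (\<Sum>t. \<integral>\<^sup>+w. ennreal (b t w) \<partial>M)"
    by (rule nn_integral_suminf) measurable
  also have "\<dots> = (\<Sum>t. ennreal (\<integral>w. b t w \<partial>M))"
    by (rule suminf_cong, rule nn_integral_eq_integral) (use b in auto)
  also have "\<dots> \<noteq> \<top>"
    by (rule ennreal_suminf_neq_top[OF summable]) (use b in \<open>auto intro!: integral_nonneg_AE\<close>)
  finally have "(\<integral>\<^sup>+w. (\<Sum>t. ennreal (b t w)) \<partial>M) \<noteq> \<infinity>" by simp
  then have "AE w in M. (\<Sum>t. ennreal (b t w)) \<noteq> \<infinity>"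
    by (rule nn_integral_noteq_infinite[rotated]) measurable
  then show ?thesis
    by eventually_elim (rule summable_suminf_not_top, use b in auto)
qed

lemma integral_suminf_dominated:
  fixes h b :: "nat \<Rightarrow> 'a \<Rightarrow> real"
  assumes h: "\<And>t. h t \<in> borel_measurable M"
    and b: "\<And>t. integrable M (b t)" and bound: "\<And>t w. \<bar>h t w\<bar> \<le> b t w"
    and summable: "summable (\<lambda>t. \<integral>w. b t w \<partial>M)"
  shows "integrable M (h t)"
    and "AE w in M. summable (\<lambda>t. h t w)"
    and "integrable M (\<lambda>w. \<Sum>t. h t w)"
    and "(\<integral>w. (\<Sum>t. h t w) \<partial>M) = (\<Sum>t. \<integral>w. h t w \<partial>M)"
    and "summable (\<lambda>t. \<integral>w. h t w \<partial>M)"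
proof -
  have b_nonneg: "\<And>t w. 0 \<le> b t w" using order_trans[OF abs_ge_zero bound] .
  have int: "integrable M (h t)" for t
    by (rule Bochner_Integration.integrable_bound[OF b[of t] h[of t]]) (simp add: bound b_nonneg)
  then show "integrable M (h t)" .
  have norm_summable: "AE w in M. summable (\<lambda>t. norm (h t w))"
    using AE_summable_if_summable_integral[OF b b_nonneg summable]
    by eventually_elim (rule summable_comparison_test'[where N=0], assumption, use bound in simp)
  then show "AE w in M. summable (\<lambda>t. h t w)"
    by eventually_elim (rule summable_norm_cancel)
  have "norm (\<integral>w. norm (h t w) \<partial>M) \<le> (\<integral>w. b t w \<partial>M)" for t
    using integral_mono[OF integrable_norm[OF int] b, of t] bound
    by (simp add: integral_nonneg_AE)
  then have int_norm_summable: "summable (\<lambda>t. \<integral>w. norm (h t w) \<partial>M)"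
    by (rule summable_comparison_test'[OF summable, where N=0])
  show "integrable M (\<lambda>w. \<Sum>t. h t w)"
    by (rule integrable_suminf[OF int norm_summable int_norm_summable])
  show "(\<integral>w. (\<Sum>t. h t w) \<partial>M) = (\<Sum>t. \<integral>w. h t w \<partial>M)"
    by (rule integral_suminf[OF int norm_summable int_norm_summable])
  show "summable (\<lambda>t. \<integral>w. h t w \<partial>M)"
    by (rule summable_integral[OF int norm_summable int_norm_summable])
qed

definition impulse :: "nat \<Rightarrow> ('w \<Rightarrow> 'b::zero) \<Rightarrow> nat \<Rightarrow> 'w \<Rightarrow> 'b" where
  "impulse s v t = (if t = s then v else (\<lambda>w. 0))"

lemma impulse_same [simp]: "impulse s v s = v"
  and impulse_other [simp]: "t \<noteq> s \<Longrightarrow> impulse s v t = (\<lambda>w. 0)"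
  and impulse_zero [simp]: "impulse s (\<lambda>w. 0) = (\<lambda>t w. 0)"
  by (auto simp: impulse_def fun_eq_iff)

text \<open>\<open>G\<close> is the common-noise \<open>\<sigma>\<close>-algebra \<open>F\<^sup>0\<close> and \<open>F\<close> the filtration. The last assumption holds
  on the product space \<open>\<Omega>\<^sup>0 \<times> \<Omega>\<^sup>1\<close>, where conditioning on the common noise integrates out the
  idiosyncratic one and so preserves adaptedness.\<close>

locale mean_field_model = prob_space M for M :: "'w measure" +
  fixes G :: "'w measure" and F :: "nat \<Rightarrow> 'w measure" and \<gamma> :: real
  assumes subalgebra_G: "subalgebra M G"
    and subalgebra_F: "\<And>t. subalgebra M (F t)"
    and F_mono: "\<And>t. sets (F t) \<subseteq> sets (F (Suc t))"
    and discount_pos: "0 < \<gamma>" and discount_le_1: "\<gamma> \<le> 1"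
    and real_cond_exp_G_adapted: "\<And>t (f::'w \<Rightarrow> real). f \<in> borel_measurable (F t) \<Longrightarrow>
        integrable M f \<Longrightarrow> \<exists>g. g \<in> borel_measurable (F t) \<and> (AE w in M. real_cond_exp M G f w = g w)"
begin

sublocale G: finite_measure_subalgebra M G
  by unfold_locales (rule subalgebra_G)

lemma discount_power_nonneg: "0 \<le> \<gamma> ^ t"
  using discount_pos by simp

definition discounted_L2 :: "(nat \<Rightarrow> 'w \<Rightarrow> real^'k) \<Rightarrow> bool" where
  "discounted_L2 f \<longleftrightarrow> (\<forall>t. square_integrable M (f t)) \<and>
     summable (\<lambda>t. \<gamma>^t * (\<integral>w. (norm (f t w))\<^sup>2 \<partial>M))"

lemma discounted_L2_square_integrable: "discounted_L2 f \<Longrightarrow> square_integrable M (f t)"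
  and discounted_L2_measurable: "discounted_L2 f \<Longrightarrow> f t \<in> borel_measurable M"
  and discounted_L2_summable:
    "discounted_L2 f \<Longrightarrow> summable (\<lambda>t. \<gamma>^t * (\<integral>w. (norm (f t w))\<^sup>2 \<partial>M))"
  unfolding discounted_L2_def square_integrable_def by auto

lemma discounted_L2_bound:
  fixes f :: "nat \<Rightarrow> 'w \<Rightarrow> real^'k" and g :: "nat \<Rightarrow> 'w \<Rightarrow> real^'m"
  assumes "discounted_L2 f" "\<And>t. square_integrable M (g t)"
    and "\<And>t. (\<integral>w. (norm (g t w))\<^sup>2 \<partial>M) \<le> C * (\<integral>w. (norm (f t w))\<^sup>2 \<partial>M)"
  shows "discounted_L2 g"
  unfolding discounted_L2_def
proof
  show "summable (\<lambda>t. \<gamma>^t * (\<integral>w. (norm (g t w))\<^sup>2 \<partial>M))"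
  proof (rule summable_comparison_test[OF _ summable_mult[OF discounted_L2_summable[OF assms(1)], of C]],
      intro exI allI impI)
    fix t :: nat
    have "0 \<le> (\<integral>w. (norm (g t w))\<^sup>2 \<partial>M)" by (rule integral_nonneg_AE) auto
    then show "norm (\<gamma>^t * (\<integral>w. (norm (g t w))\<^sup>2 \<partial>M)) \<le> C * (\<gamma>^t * (\<integral>w. (norm (f t w))\<^sup>2 \<partial>M))"
      using mult_left_mono[OF assms(3)[of t] discount_power_nonneg[of t]] discount_power_nonneg[of t]
      by (simp add: abs_mult mult.left_commute)
  qed
qed (use assms(2) in blast)

lemma discounted_L2_vcond_exp: "discounted_L2 f \<Longrightarrow> discounted_L2 (\<lambda>t. vcond_exp M G (f t))"
  by (rule discounted_L2_bound[where C=1])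
    (auto intro: G.square_integrable_vcond_exp G.integral_norm_sq_vcond_exp_le
      discounted_L2_square_integrable)

lemma discounted_L2_scaleR: "discounted_L2 f \<Longrightarrow> discounted_L2 (\<lambda>t w. c *\<^sub>R f t w)"
  by (rule discounted_L2_bound[where C="c\<^sup>2"])
    (auto intro: square_integrable_scaleR discounted_L2_square_integrable simp: power_mult_distrib)

lemma discounted_L2_matrix_vector_mult:
  fixes f :: "nat \<Rightarrow> 'w \<Rightarrow> real^'n" and A :: "real^'n^'m"
  assumes f: "discounted_L2 f"
  shows "discounted_L2 (\<lambda>t w. A *v f t w)"
proof (rule discounted_L2_bound[OF f, where C="(mat_norm A)\<^sup>2"])
  fix t
  note sq = discounted_L2_square_integrable[OF f, of t]
  show "square_integrable M (\<lambda>w. A *v f t w)"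
    by (rule square_integrable_matrix_vector_mult[OF sq])
  show "(\<integral>w. (norm (A *v f t w))\<^sup>2 \<partial>M) \<le> (mat_norm A)\<^sup>2 * (\<integral>w. (norm (f t w))\<^sup>2 \<partial>M)"
    using integral_mono[OF square_integrable_norm_sq[OF square_integrable_matrix_vector_mult[OF sq]]
        _ norm_matrix_vector_mult_sq_le] square_integrable_norm_sq[OF sq] by simp
qed

lemma discounted_L2_add:
  fixes f g :: "nat \<Rightarrow> 'w \<Rightarrow> real^'k"
  assumes f: "discounted_L2 f" and g: "discounted_L2 g"
  shows "discounted_L2 (\<lambda>t w. f t w + g t w)"
  unfolding discounted_L2_def
proof
  note sq = discounted_L2_square_integrable[OF f] discounted_L2_square_integrable[OF g]
  show "\<forall>t. square_integrable M (\<lambda>w. f t w + g t w)" by (auto intro: square_integrable_add sq)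
  have bound: "(\<integral>w. (norm (f t w + g t w))\<^sup>2 \<partial>M)
      \<le> 2 * (\<integral>w. (norm (f t w))\<^sup>2 \<partial>M) + 2 * (\<integral>w. (norm (g t w))\<^sup>2 \<partial>M)" for t
  proof -
    note int = square_integrable_norm_sq[OF sq(1)[of t]] square_integrable_norm_sq[OF sq(2)[of t]]
    have "(\<integral>w. (norm (f t w + g t w))\<^sup>2 \<partial>M)
        \<le> (\<integral>w. 2 * (norm (f t w))\<^sup>2 + 2 * (norm (g t w))\<^sup>2 \<partial>M)"
      by (rule integral_mono[OF square_integrable_norm_sq[OF square_integrable_add[OF sq(1,2)]] _ norm_add_sq_le])
        (use int in simp)
    then show ?thesis using int by simp
  qed
  show "summable (\<lambda>t. \<gamma>^t * (\<integral>w. (norm (f t w + g t w))\<^sup>2 \<partial>M))"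
  proof (rule summable_comparison_test[OF _ summable_add[OF
          summable_mult[OF discounted_L2_summable[OF f], of 2] summable_mult[OF discounted_L2_summable[OF g], of 2]]],
      intro exI allI impI)
    fix t :: nat
    have "0 \<le> (\<integral>w. (norm (f t w + g t w))\<^sup>2 \<partial>M)" by (rule integral_nonneg_AE) auto
    then show "norm (\<gamma>^t * (\<integral>w. (norm (f t w + g t w))\<^sup>2 \<partial>M))
        \<le> 2 * (\<gamma>^t * (\<integral>w. (norm (f t w))\<^sup>2 \<partial>M)) + 2 * (\<gamma>^t * (\<integral>w. (norm (g t w))\<^sup>2 \<partial>M))"
      using mult_left_mono[OF bound[of t] discount_power_nonneg[of t]] discount_power_nonneg[of t]
      by (simp add: abs_mult algebra_simps)
  qed
qed

lemma discounted_L2_impulse: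
  "square_integrable M v \<Longrightarrow> discounted_L2 (impulse s v)"
  unfolding discounted_L2_def
proof (intro conjI allI)
  assume v: "square_integrable M v"
  then show "square_integrable M (impulse s v t)" for t
    by (cases "t = s") (auto simp: square_integrable_zero)
  have "(\<lambda>t. \<gamma>^t * (\<integral>w. (norm (impulse s v t w))\<^sup>2 \<partial>M))
      = (\<lambda>t. if t = s then \<gamma>^s * (\<integral>w. (norm (v w))\<^sup>2 \<partial>M) else 0)"
    by (auto simp: impulse_def)
  then show "summable (\<lambda>t. \<gamma>^t * (\<integral>w. (norm (impulse s v t w))\<^sup>2 \<partial>M))" by simp
qed

lemma proc_class_imp_discounted_L2:
  fixes u :: "nat \<Rightarrow> 'w \<Rightarrow> real^'k"
  assumes "proc_class M F \<gamma> u"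
  shows "discounted_L2 u"
proof -
  have [measurable]: "\<And>t. u t \<in> borel_measurable M"
    using assms subalgebra_F by (auto simp: proc_class_def intro: measurable_from_subalg)
  define N where "N = (\<integral>\<^sup>+ w. (\<Sum>t. ennreal (\<gamma>^t * (norm (u t w))\<^sup>2)) \<partial>M)"
  have N_finite: "N < \<infinity>" using assms by (simp add: proc_class_def N_def)
  have N_eq: "N = (\<Sum>t. \<integral>\<^sup>+ w. ennreal (\<gamma>^t * (norm (u t w))\<^sup>2) \<partial>M)"
    unfolding N_def by (rule nn_integral_suminf) measurable
  have int: "integrable M (\<lambda>w. \<gamma>^t * (norm (u t w))\<^sup>2)" for t
  proof -
    have "(\<integral>\<^sup>+ w. ennreal (\<gamma>^t * (norm (u t w))\<^sup>2) \<partial>M) \<le> N"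
      unfolding N_eq by (rule sum_le_suminf[OF summableI, of "{t}", simplified])
    then have "(\<integral>\<^sup>+ w. ennreal (norm (\<gamma>^t * (norm (u t w))\<^sup>2)) \<partial>M) < \<infinity>"
      using N_finite discount_pos by (simp add: abs_mult)
    then show ?thesis by (subst integrable_iff_bounded) auto
  qed
  then have "square_integrable M (u t)" for t
    using discount_pos by (simp add: square_integrable_def)
  moreover have "(\<Sum>t. ennreal (\<gamma>^t * (\<integral>w. (norm (u t w))\<^sup>2 \<partial>M))) = N"
    unfolding N_eq by (rule suminf_cong, subst nn_integral_eq_integral) (use int discount_pos in auto)
  then have "summable (\<lambda>t. \<gamma>^t * (\<integral>w. (norm (u t w))\<^sup>2 \<partial>M))"
    using N_finite discount_pos
    by (intro summable_suminf_not_top) (auto intro!: integral_nonneg_AE)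
  ultimately show ?thesis by (simp add: discounted_L2_def)
qed

lemma proc_classI_discounted_L2:
  fixes u :: "nat \<Rightarrow> 'w \<Rightarrow> real^'k"
  assumes u: "discounted_L2 u" and adapted: "\<And>t. u t \<in> borel_measurable (F t)"
  shows "proc_class M F \<gamma> u"
proof -
  have [measurable]: "\<And>t. u t \<in> borel_measurable M"
    using u by (rule discounted_L2_measurable)
  have int: "\<And>t. integrable M (\<lambda>w. \<gamma>^t * (norm (u t w))\<^sup>2)"
    using u by (auto simp: discounted_L2_def square_integrable_def)
  have "(\<integral>\<^sup>+ w. (\<Sum>t. ennreal (\<gamma>^t * (norm (u t w))\<^sup>2)) \<partial>M)
      = (\<Sum>t. \<integral>\<^sup>+ w. ennreal (\<gamma>^t * (norm (u t w))\<^sup>2) \<partial>M)"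
    by (rule nn_integral_suminf) measurable
  also have "\<dots> = (\<Sum>t. ennreal (\<gamma>^t * (\<integral>w. (norm (u t w))\<^sup>2 \<partial>M)))"
    by (rule suminf_cong, subst nn_integral_eq_integral) (use int discount_pos in auto)
  also have "\<dots> < \<infinity>"
  proof -
    have "(\<Sum>t. ennreal (\<gamma>^t * (\<integral>w. (norm (u t w))\<^sup>2 \<partial>M))) \<noteq> \<top>"
      by (rule ennreal_suminf_neq_top[OF discounted_L2_summable[OF u]])
        (intro mult_nonneg_nonneg discount_power_nonneg integral_nonneg_AE, simp)
    then show ?thesis by (simp add: less_top)
  qed
  finally have total: "(\<integral>\<^sup>+ w. (\<Sum>t. ennreal (\<gamma>^t * (norm (u t w))\<^sup>2)) \<partial>M) < \<infinity>" .
  have "(\<integral>\<^sup>+ w. ennreal (Max {\<gamma>^t * (norm (u t w))\<^sup>2 | t. t \<le> T}) \<partial>M) < \<infinity>" for T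
  proof (rule le_less_trans[OF nn_integral_mono total])
    fix w
    have "finite {\<gamma>^t * (norm (u t w))\<^sup>2 | t. t \<le> T}" "{\<gamma>^t * (norm (u t w))\<^sup>2 | t. t \<le> T} \<noteq> {}"
      by auto
    from Max_in[OF this] obtain t0
      where "Max {\<gamma>^t * (norm (u t w))\<^sup>2 | t. t \<le> T} = \<gamma>^t0 * (norm (u t0 w))\<^sup>2"
      by auto
    then show "ennreal (Max {\<gamma>^t * (norm (u t w))\<^sup>2 | t. t \<le> T})
        \<le> (\<Sum>t. ennreal (\<gamma>^t * (norm (u t w))\<^sup>2))"
      using sum_le_suminf[OF summableI, of "{t0}" "\<lambda>t. ennreal (\<gamma>^t * (norm (u t w))\<^sup>2)"] by simp
  qed
  with total adapted show ?thesis unfolding proc_class_def by blast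
qed

definition discounted_dominated :: "(nat \<Rightarrow> 'w \<Rightarrow> real) \<Rightarrow> bool" where
  "discounted_dominated h \<longleftrightarrow> (\<forall>t. h t \<in> borel_measurable M) \<and>
     (\<exists>b. (\<forall>t. integrable M (b t)) \<and> (\<forall>t w. \<bar>h t w\<bar> \<le> b t w) \<and>
          summable (\<lambda>t. \<gamma>^t * (\<integral>w. b t w \<partial>M)))"

lemma discounted_dominated_integral_suminf:
  assumes "discounted_dominated h"
  shows "integrable M (h t)"
    and "AE w in M. summable (\<lambda>t. \<gamma>^t * h t w)"
    and "integrable M (\<lambda>w. \<Sum>t. \<gamma>^t * h t w)"
    and "(\<integral>w. (\<Sum>t. \<gamma>^t * h t w) \<partial>M) = (\<Sum>t. \<gamma>^t * (\<integral>w. h t w \<partial>M))"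
    and "summable (\<lambda>t. \<gamma>^t * (\<integral>w. h t w \<partial>M))"
proof -
  obtain b where h: "\<And>t. h t \<in> borel_measurable M" and b: "\<And>t. integrable M (b t)"
    and bound: "\<And>t w. \<bar>h t w\<bar> \<le> b t w" and summable: "summable (\<lambda>t. \<gamma>^t * (\<integral>w. b t w \<partial>M))"
    using assms unfolding discounted_dominated_def by blast
  have bound': "\<bar>\<gamma>^t * h t w\<bar> \<le> \<gamma>^t * b t w" for t w
    using mult_left_mono[OF bound[of t w] discount_power_nonneg[of t]]
    by (simp add: abs_mult power_abs abs_of_pos[OF discount_pos])
  have h': "(\<lambda>w. \<gamma>^t * h t w) \<in> borel_measurable M" for t
    using h by measurable
  have b': "integrable M (\<lambda>w. \<gamma>^t * b t w)" for t
    using b by simp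
  have summable': "summable (\<lambda>t. \<integral>w. \<gamma>^t * b t w \<partial>M)"
    using summable by simp
  note dom = integral_suminf_dominated[OF h' b' bound' summable']
  show "integrable M (h t)"
    by (rule Bochner_Integration.integrable_bound[OF b[of t] h[of t]])
      (simp add: bound order_trans[OF abs_ge_zero bound])
  show "AE w in M. summable (\<lambda>t. \<gamma>^t * h t w)" "integrable M (\<lambda>w. \<Sum>t. \<gamma>^t * h t w)"
    by (fact dom(2), fact dom(3))
  show "(\<integral>w. (\<Sum>t. \<gamma>^t * h t w) \<partial>M) = (\<Sum>t. \<gamma>^t * (\<integral>w. h t w \<partial>M))"
    "summable (\<lambda>t. \<gamma>^t * (\<integral>w. h t w \<partial>M))"
    using dom(4,5) by simp_all
qed

lemma discounted_dominated_mono: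
  assumes "discounted_dominated g" "\<And>t. h t \<in> borel_measurable M" "\<And>t w. \<bar>h t w\<bar> \<le> g t w"
  shows "discounted_dominated h"
proof -
  obtain b where "\<And>t. integrable M (b t)" "\<And>t w. \<bar>g t w\<bar> \<le> b t w"
      "summable (\<lambda>t. \<gamma>^t * (\<integral>w. b t w \<partial>M))"
    using assms(1) unfolding discounted_dominated_def by blast
  moreover have "\<bar>h t w\<bar> \<le> b t w" for t w
    using assms(3)[of t w] abs_ge_self[of "g t w"] \<open>\<bar>g t w\<bar> \<le> b t w\<close> by linarith
  ultimately show ?thesis
    using assms(2) unfolding discounted_dominated_def by blast
qed

lemma discounted_dominated_add:
  assumes "discounted_dominated g" "discounted_dominated h"
  shows "discounted_dominated (\<lambda>t w. g t w + h t w)"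
proof -
  obtain a where a: "\<And>t. integrable M (a t)" "\<And>t w. \<bar>g t w\<bar> \<le> a t w"
      "summable (\<lambda>t. \<gamma>^t * (\<integral>w. a t w \<partial>M))"
    using assms(1) unfolding discounted_dominated_def by blast
  obtain b where b: "\<And>t. integrable M (b t)" "\<And>t w. \<bar>h t w\<bar> \<le> b t w"
      "summable (\<lambda>t. \<gamma>^t * (\<integral>w. b t w \<partial>M))"
    using assms(2) unfolding discounted_dominated_def by blast
  have "\<bar>g t w + h t w\<bar> \<le> a t w + b t w" for t w
    using a(2)[of t w] b(2)[of t w] by linarith
  moreover have "summable (\<lambda>t. \<gamma>^t * (\<integral>w. a t w + b t w \<partial>M))"
    using summable_add[OF a(3) b(3)] a(1) b(1) by (simp add: distrib_left)
  moreover have "(\<lambda>w. g t w + h t w) \<in> borel_measurable M" for t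
    using assms unfolding discounted_dominated_def by (auto intro: borel_measurable_add)
  ultimately show ?thesis
    using a(1) b(1) unfolding discounted_dominated_def
    by (intro conjI allI exI[of _ "\<lambda>t w. a t w + b t w"]) auto
qed

lemma discounted_dominated_cmult:
  assumes "discounted_dominated h"
  shows "discounted_dominated (\<lambda>t w. c * h t w)"
proof -
  obtain b where b: "\<And>t. integrable M (b t)" "\<And>t w. \<bar>h t w\<bar> \<le> b t w"
      "summable (\<lambda>t. \<gamma>^t * (\<integral>w. b t w \<partial>M))"
    using assms unfolding discounted_dominated_def by blast
  have "\<bar>c * h t w\<bar> \<le> \<bar>c\<bar> * b t w" for t w
    using mult_left_mono[OF b(2)[of t w] abs_ge_zero[of c]] by (simp add: abs_mult)
  moreover have "summable (\<lambda>t. \<gamma>^t * (\<integral>w. \<bar>c\<bar> * b t w \<partial>M))"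
    using summable_mult[OF b(3), of "\<bar>c\<bar>"] by (simp add: mult.left_commute)
  moreover have "(\<lambda>w. c * h t w) \<in> borel_measurable M" for t
    using assms unfolding discounted_dominated_def by (auto intro: borel_measurable_times)
  ultimately show ?thesis
    using b(1) unfolding discounted_dominated_def
    by (intro conjI allI exI[of _ "\<lambda>t w. \<bar>c\<bar> * b t w"]) auto
qed

lemma discounted_dominated_diff:
  "discounted_dominated g \<Longrightarrow> discounted_dominated h \<Longrightarrow> discounted_dominated (\<lambda>t w. g t w - h t w)"
  using discounted_dominated_add[of g "\<lambda>t w. (-1) * h t w"] discounted_dominated_cmult[of h "-1"]
  by simp

lemma discounted_dominated_norm_sq:
  assumes "discounted_L2 f"
  shows "discounted_dominated (\<lambda>t w. (norm (f t w))\<^sup>2)"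
  unfolding discounted_dominated_def
proof (intro conjI allI exI[of _ "\<lambda>t w. (norm (f t w))\<^sup>2"])
  show "(\<lambda>w. (norm (f t w))\<^sup>2) \<in> borel_measurable M" "integrable M (\<lambda>w. (norm (f t w))\<^sup>2)" for t
    using discounted_L2_square_integrable[OF assms, of t] by (auto simp: square_integrable_def)
qed (use discounted_L2_summable[OF assms] in simp_all)

definition ae_F_measurable :: "nat \<Rightarrow> ('w \<Rightarrow> real^'k) \<Rightarrow> bool" where
  "ae_F_measurable t f \<longleftrightarrow> (\<exists>g. g \<in> borel_measurable (F t) \<and> (AE w in M. f w = g w))"

lemma ae_F_measurableI: "f \<in> borel_measurable (F t) \<Longrightarrow> ae_F_measurable t f"
  unfolding ae_F_measurable_def by auto

lemma ae_F_measurableE: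
  assumes "ae_F_measurable t f"
  obtains g where "g \<in> borel_measurable (F t)" "g \<in> borel_measurable M" "AE w in M. f w = g w"
  using assms subalgebra_F measurable_from_subalg unfolding ae_F_measurable_def by blast

lemma sets_F_mono: "t \<le> t' \<Longrightarrow> sets (F t) \<subseteq> sets (F t')"
proof (induction t' rule: dec_induct)
  case (step n)
  then show ?case using F_mono[of n] by auto
qed simp

lemma ae_F_measurable_mono:
  assumes "t \<le> t'" "ae_F_measurable t f"
  shows "ae_F_measurable t' f"
proof -
  have "g \<in> borel_measurable (F t')" if "g \<in> borel_measurable (F t)" for g :: "'w \<Rightarrow> real^'k"
    using measurable_mono[of borel borel "F t" "F t'"] sets_F_mono[OF assms(1)] that
      subalgebra_F[of t] subalgebra_F[of t'] by (auto simp: subalgebra_def)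
  then show ?thesis using assms(2) unfolding ae_F_measurable_def by blast
qed

lemma ae_F_measurable_add:
  fixes f g :: "'w \<Rightarrow> real^'k"
  assumes "ae_F_measurable t f" "ae_F_measurable t g"
  shows "ae_F_measurable t (\<lambda>w. f w + g w)"
proof -
  obtain f' g' where "f' \<in> borel_measurable (F t)" "AE w in M. f w = f' w"
    and "g' \<in> borel_measurable (F t)" "AE w in M. g w = g' w"
    using assms unfolding ae_F_measurable_def by blast
  then show ?thesis unfolding ae_F_measurable_def
    by (intro exI[of _ "\<lambda>w. f' w + g' w"]) auto
qed

lemma ae_F_measurable_matrix_vector_mult:
  fixes f :: "'w \<Rightarrow> real^'n" and A :: "real^'n^'m"
  assumes "ae_F_measurable t f"
  shows "ae_F_measurable t (\<lambda>w. A *v f w)"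
proof -
  obtain f' where "f' \<in> borel_measurable (F t)" "AE w in M. f w = f' w"
    using assms unfolding ae_F_measurable_def by blast
  then show ?thesis unfolding ae_F_measurable_def
    by (intro exI[of _ "\<lambda>w. A *v f' w"]) auto
qed

lemma ae_F_measurable_scaleR:
  fixes f :: "'w \<Rightarrow> real^'n"
  assumes "ae_F_measurable t f"
  shows "ae_F_measurable t (\<lambda>w. c *\<^sub>R f w)"
proof -
  obtain f' where "f' \<in> borel_measurable (F t)" "AE w in M. f w = f' w"
    using assms unfolding ae_F_measurable_def by blast
  then show ?thesis unfolding ae_F_measurable_def
    by (intro exI[of _ "\<lambda>w. c *\<^sub>R f' w"]) auto
qed

lemma ae_F_measurable_vcond_exp:
  fixes f :: "'w \<Rightarrow> real^'k"
  assumes "ae_F_measurable t f" "square_integrable M f"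
  shows "ae_F_measurable t (vcond_exp M G f)"
proof -
  obtain g where g_F: "g \<in> borel_measurable (F t)" and g_M: "g \<in> borel_measurable M"
    and fg: "AE w in M. f w = g w"
    using assms(1) by (rule ae_F_measurableE)
  have g: "square_integrable M g" by (rule square_integrable_AE_cong[OF assms(2) g_M fg])
  have "\<exists>h. h \<in> borel_measurable (F t) \<and> (AE w in M. real_cond_exp M G (\<lambda>v. g v $ i) w = h w)" for i
    by (rule real_cond_exp_G_adapted) (use g_F G.integrable_vec_nth_square_integrable[OF g] in auto)
  then obtain H where H: "\<And>i. H i \<in> borel_measurable (F t)"
    "\<And>i. AE w in M. real_cond_exp M G (\<lambda>v. g v $ i) w = H i w" by metis
  have "(\<lambda>w. \<chi> i. H i w) \<in> borel_measurable (F t)"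
    using H(1) by (subst borel_measurable_vec_iff) simp
  moreover have "AE w in M. vcond_exp M G g w = (\<chi> i. H i w)"
    by (rule AE_vec_eqI) (simp add: vcond_exp_nth H(2))
  moreover have "AE w in M. vcond_exp M G f w = vcond_exp M G g w"
    by (rule G.vcond_exp_AE_cong[OF fg]) (use assms(2) g_M in \<open>auto simp: square_integrable_def\<close>)
  ultimately show ?thesis unfolding ae_F_measurable_def by (intro exI[of _ "\<lambda>w. \<chi> i. H i w"]) auto
qed

lemma integral_inner_vcond_exp_F:
  fixes f Z :: "'w \<Rightarrow> real^'k"
  assumes "ae_F_measurable t f" "square_integrable M f" "square_integrable M Z"
  shows "(\<integral>w. f w \<bullet> vcond_exp M (F t) Z w \<partial>M) = (\<integral>w. f w \<bullet> Z w \<partial>M)"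
proof -
  interpret F_t: finite_measure_subalgebra M "F t"
    by unfold_locales (rule subalgebra_F)
  obtain g where g_F: "g \<in> borel_measurable (F t)" and g_M: "g \<in> borel_measurable M"
    and fg: "AE w in M. f w = g w"
    using assms(1) by (rule ae_F_measurableE)
  have f_M: "f \<in> borel_measurable M" and Z_M: "Z \<in> borel_measurable M"
    using assms(2,3) by (auto simp: square_integrable_def)
  have "(\<integral>w. f w \<bullet> vcond_exp M (F t) Z w \<partial>M) = (\<integral>w. g w \<bullet> vcond_exp M (F t) Z w \<partial>M)"
    by (rule integral_cong_AE) (use fg f_M g_M in auto)
  also have "\<dots> = (\<integral>w. g w \<bullet> Z w \<partial>M)"
    by (rule F_t.integral_inner_vcond_exp_F_meas[OF square_integrable_AE_cong[OF assms(2) g_M fg] g_F assms(3)])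
  also have "\<dots> = (\<integral>w. f w \<bullet> Z w \<partial>M)"
    by (rule integral_cong_AE) (use fg f_M g_M Z_M in auto)
  finally show ?thesis .
qed

lemma discounted_inner_tendsto_zero:
  fixes f g :: "nat \<Rightarrow> 'w \<Rightarrow> real^'k"
  assumes f: "discounted_L2 f" and g: "discounted_L2 g"
  shows "(\<lambda>n. \<gamma>^n * (\<integral>w. f n w \<bullet> g n w \<partial>M)) \<longlonglongrightarrow> 0"
proof (rule Lim_null_comparison)
  let ?b = "\<lambda>n. \<gamma>^n * (\<integral>w. (norm (f n w))\<^sup>2 \<partial>M) + \<gamma>^n * (\<integral>w. (norm (g n w))\<^sup>2 \<partial>M)"
  show "?b \<longlonglongrightarrow> 0"
    using summable_LIMSEQ_zero[OF discounted_L2_summable[OF f]]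
      summable_LIMSEQ_zero[OF discounted_L2_summable[OF g]] by (rule tendsto_add_zero)
  show "\<forall>\<^sub>F n in sequentially. norm (\<gamma>^n * (\<integral>w. f n w \<bullet> g n w \<partial>M)) \<le> ?b n"
  proof (intro always_eventually allI)
    fix n
    note sq = discounted_L2_square_integrable[OF f, of n] discounted_L2_square_integrable[OF g, of n]
    have "\<bar>\<integral>w. f n w \<bullet> g n w \<partial>M\<bar> \<le> (\<integral>w. (norm (f n w))\<^sup>2 + (norm (g n w))\<^sup>2 \<partial>M)"
      by (rule order_trans[OF integral_abs_bound integral_mono])
        (use integrable_inner_square_integrable[OF sq] square_integrable_norm_sq[OF sq(1)]
          square_integrable_norm_sq[OF sq(2)] abs_inner_le_norm_sq_add in auto)
    also have "\<dots> = (\<integral>w. (norm (f n w))\<^sup>2 \<partial>M) + (\<integral>w. (norm (g n w))\<^sup>2 \<partial>M)"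
      using square_integrable_norm_sq[OF sq(1)] square_integrable_norm_sq[OF sq(2)] by simp
    finally show "norm (\<gamma>^n * (\<integral>w. f n w \<bullet> g n w \<partial>M)) \<le> ?b n"
      using mult_left_mono[OF _ discount_power_nonneg]
      by (simp add: abs_mult distrib_left[symmetric] abs_of_nonneg[OF discount_power_nonneg])
  qed
qed

lemma ae_F_measurable_diff:
  fixes f g :: "'w \<Rightarrow> real^'k"
  assumes "ae_F_measurable t f" "ae_F_measurable t g"
  shows "ae_F_measurable t (\<lambda>w. f w - g w)"
  using ae_F_measurable_add[OF assms(1) ae_F_measurable_scaleR[OF assms(2), of "-1"]] by simp

lemma AE_eq_0_if_integral_inner_eq_0:
  fixes g :: "'w \<Rightarrow> real^'k"
  assumes g: "square_integrable M g" "ae_F_measurable s g"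
    and orth: "\<And>v. v \<in> borel_measurable (F s) \<Longrightarrow> square_integrable M v \<Longrightarrow> (\<integral>w. g w \<bullet> v w \<partial>M) = 0"
  shows "AE w in M. g w = 0"
proof -
  obtain g' where g'_F: "g' \<in> borel_measurable (F s)" and g'_M: "g' \<in> borel_measurable M"
    and gg': "AE w in M. g w = g' w"
    using g(2) by (rule ae_F_measurableE)
  have "(\<integral>w. (norm (g w))\<^sup>2 \<partial>M) = (\<integral>w. g w \<bullet> g' w \<partial>M)"
    by (rule integral_cong_AE)
      (use gg' g(1) g'_M in \<open>auto simp: square_integrable_def power2_norm_eq_inner\<close>)
  also have "\<dots> = 0"
    by (rule orth[OF g'_F square_integrable_AE_cong[OF g(1) g'_M gg']])
  finally have "AE w in M. (norm (g w))\<^sup>2 = 0"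
    using integral_nonneg_eq_0_iff_AE[OF square_integrable_norm_sq[OF g(1)]] by simp
  then show ?thesis by eventually_elim simp
qed

end

section \<open>The linear-quadratic mean-field game\<close>

lemma quadratic_form_add_scaleR:
  assumes "symm S"
  shows "(e + c *\<^sub>R f) \<bullet> (S *v (e + c *\<^sub>R f))
    = e \<bullet> (S *v e) + 2 * c * (e \<bullet> (S *v f)) + c\<^sup>2 * (f \<bullet> (S *v (f::real^'n)))"
  using symm_inner_commute[OF assms, of f e]
  by (simp add: matrix_vector_right_distrib matrix_vector_mult_scaleR inner_add_left inner_add_right
      algebra_simps power2_eq_square)

declare state.simps(2)[simp del]

locale lq_game = mean_field_model M G F \<gamma> for M :: "'w measure" and G F \<gamma> +
  fixes A Ab Q Qb :: "real^'d^'d" and B1 Bb1 B2 Bb2 :: "real^'l^'d" and R1 Rb1 R2 Rb2 :: "real^'l^'l"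
  assumes symm_Q: "symm Q" "symm Qb"
    and symm_R: "symm R1" "symm Rb1" "symm R2" "symm Rb2"
    and discounted_stable: "\<gamma> * (mat_norm A)\<^sup>2 < 1" "\<gamma> * (mat_norm (A + Ab))\<^sup>2 < 1"
begin

abbreviation cond_G where "cond_G f \<equiv> vcond_exp M G f"

abbreviation X where "X eps v1 v2 \<equiv> state M G eps A Ab B1 Bb1 B2 Bb2 v1 v2"

abbreviation response where "response v1 v2 \<equiv> X (\<lambda>t w. 0) v1 v2"

abbreviation cost where "cost x v1 v2 \<equiv> run_cost M G Q Qb R1 Rb1 R2 Rb2 x v1 v2"

definition J where
  "J eps v1 v2 = (\<integral>w. (\<Sum>t. \<gamma>^t * cost (X eps v1 v2 t) (v1 t) (v2 t) w) \<partial>M)"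

definition mf_bilinear ::
  "real^'n^'n \<Rightarrow> real^'n^'n \<Rightarrow> ('w \<Rightarrow> real^'n) \<Rightarrow> ('w \<Rightarrow> real^'n) \<Rightarrow> 'w \<Rightarrow> real" where
  "mf_bilinear P Pb x y w =
     (x w - cond_G x w) \<bullet> (P *v (y w - cond_G y w)) + cond_G x w \<bullet> ((P + Pb) *v cond_G y w)"

definition cost_bilinear where
  "cost_bilinear x v1 v2 y z1 z2 w =
     mf_bilinear Q Qb x y w + mf_bilinear R1 Rb1 v1 z1 w - mf_bilinear R2 Rb2 v2 z2 w"

lemma run_cost_eq_cost_bilinear: "cost x v1 v2 w = cost_bilinear x v1 v2 x v1 v2 w"
  unfolding run_cost_def cost_bilinear_def mf_bilinear_def Let_def by simp

lemma borel_measurable_mf_bilinear [measurable (raw)]: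
  assumes [measurable]: "x \<in> borel_measurable M" "y \<in> borel_measurable M"
  shows "mf_bilinear P Pb x y \<in> borel_measurable M"
  unfolding mf_bilinear_def by measurable

lemma borel_measurable_cost_bilinear [measurable (raw)]:
  assumes [measurable]: "x \<in> borel_measurable M" "v1 \<in> borel_measurable M" "v2 \<in> borel_measurable M"
    "y \<in> borel_measurable M" "z1 \<in> borel_measurable M" "z2 \<in> borel_measurable M"
  shows "cost_bilinear x v1 v2 y z1 z2 \<in> borel_measurable M"
  unfolding cost_bilinear_def by measurable

lemma borel_measurable_run_cost [measurable (raw)]:
  assumes [measurable]: "x \<in> borel_measurable M" "v1 \<in> borel_measurable M" "v2 \<in> borel_measurable M"
  shows "cost x v1 v2 \<in> borel_measurable M"
  unfolding run_cost_eq_cost_bilinear[abs_def] by measurable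

lemma abs_mf_bilinear_le:
  "\<bar>mf_bilinear P Pb x y w\<bar> \<le> (2 * mat_norm P + mat_norm (P + Pb)) *
     ((norm (x w))\<^sup>2 + (norm (cond_G x w))\<^sup>2 + (norm (y w))\<^sup>2 + (norm (cond_G y w))\<^sup>2)"
proof -
  let ?a = "x w" and ?a' = "cond_G x w" and ?b = "y w" and ?b' = "cond_G y w"
  let ?S = "(norm ?a)\<^sup>2 + (norm ?a')\<^sup>2 + (norm ?b)\<^sup>2 + (norm ?b')\<^sup>2"
  have "(norm (?a - ?a'))\<^sup>2 + (norm (?b - ?b'))\<^sup>2 \<le> 2 * ?S"
    using norm_add_sq_le[of ?a "- ?a'"] norm_add_sq_le[of ?b "- ?b'"] by simp
  then have "\<bar>(?a - ?a') \<bullet> (P *v (?b - ?b'))\<bar> \<le> mat_norm P * (2 * ?S)"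
    by (intro order_trans[OF abs_inner_matrix_vector_mult_le] mult_left_mono mat_norm_nonneg)
  moreover have "\<bar>?a' \<bullet> ((P + Pb) *v ?b')\<bar> \<le> mat_norm (P + Pb) * ?S"
    by (intro order_trans[OF abs_inner_matrix_vector_mult_le] mult_left_mono mat_norm_nonneg) simp
  ultimately show ?thesis
    unfolding mf_bilinear_def by (simp add: algebra_simps abs_triangle_ineq[THEN order_trans])
qed

lemma mf_bilinear_add_scaleR:
  assumes "symm P" "symm Pb"
    and "x' w = x w + c *\<^sub>R y w" "cond_G x' w = cond_G x w + c *\<^sub>R cond_G y w"
  shows "mf_bilinear P Pb x' x' w
    = mf_bilinear P Pb x x w + 2 * c * mf_bilinear P Pb x y w + c\<^sup>2 * mf_bilinear P Pb y y w"
proof -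
  have "x' w - cond_G x' w = (x w - cond_G x w) + c *\<^sub>R (y w - cond_G y w)"
    using assms(3,4) by (simp add: algebra_simps)
  then show ?thesis
    unfolding mf_bilinear_def assms(4)
    by (simp only: quadratic_form_add_scaleR[OF assms(1)] quadratic_form_add_scaleR[OF symm_add[OF assms(1,2)]])
      (simp add: algebra_simps)
qed

lemma cost_add_scaleR:
  assumes "x' w = x w + c *\<^sub>R y w" "cond_G x' w = cond_G x w + c *\<^sub>R cond_G y w"
    and "v1' w = v1 w + c *\<^sub>R z1 w" "cond_G v1' w = cond_G v1 w + c *\<^sub>R cond_G z1 w"
    and "v2' w = v2 w + c *\<^sub>R z2 w" "cond_G v2' w = cond_G v2 w + c *\<^sub>R cond_G z2 w"
  shows "cost x' v1' v2' w
    = cost x v1 v2 w + 2 * c * cost_bilinear x v1 v2 y z1 z2 w + c\<^sup>2 * cost y z1 z2 w"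
  unfolding run_cost_eq_cost_bilinear cost_bilinear_def
    mf_bilinear_add_scaleR[OF symm_Q assms(1,2)] mf_bilinear_add_scaleR[OF symm_R(1,2) assms(3,4)]
    mf_bilinear_add_scaleR[OF symm_R(3,4) assms(5,6)]
  by (simp add: algebra_simps)

lemma borel_measurable_state [measurable]:
  assumes [measurable]: "\<And>t. eps t \<in> borel_measurable M"
    "\<And>t. v1 t \<in> borel_measurable M" "\<And>t. v2 t \<in> borel_measurable M"
  shows "X eps v1 v2 t \<in> borel_measurable M"
proof (induction t)
  case (Suc t)
  have [measurable]: "X eps v1 v2 t \<in> borel_measurable M" by (rule Suc)
  show ?case by (simp only: state.simps) measurable
qed simp

lemma square_integrable_state:
  assumes "\<And>t. square_integrable M (eps t)"
    and "\<And>t. square_integrable M (v1 t)" "\<And>t. square_integrable M (v2 t)"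
  shows "square_integrable M (X eps v1 v2 t)"
proof (induction t)
  case (Suc t)
  show ?case
    by (simp only: state.simps)
      (intro square_integrable_add square_integrable_matrix_vector_mult G.square_integrable_vcond_exp Suc assms)
qed (use assms in simp)

lemma square_integrable_response:
  "(\<And>t. square_integrable M (v1 t)) \<Longrightarrow> (\<And>t. square_integrable M (v2 t)) \<Longrightarrow>
    square_integrable M (response v1 v2 t)"
  by (rule square_integrable_state) (auto simp: square_integrable_zero)

lemma state_add_scaleR:
  assumes eps: "\<And>t. eps t \<in> borel_measurable M"
    and u: "\<And>t. square_integrable M (u1 t)" "\<And>t. square_integrable M (u2 t)"
    and v: "\<And>t. square_integrable M (v1 t)" "\<And>t. square_integrable M (v2 t)"
    and x: "\<And>t. square_integrable M (X eps u1 u2 t)"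
  shows "AE w in M. X eps (\<lambda>t w. u1 t w + c *\<^sub>R v1 t w) (\<lambda>t w. u2 t w + c *\<^sub>R v2 t w) t w
            = X eps u1 u2 t w + c *\<^sub>R response v1 v2 t w"
proof (induction t)
  case (Suc t)
  have [measurable]: "\<And>t. u1 t \<in> borel_measurable M" "\<And>t. u2 t \<in> borel_measurable M"
    "\<And>t. v1 t \<in> borel_measurable M" "\<And>t. v2 t \<in> borel_measurable M"
    using u v by (auto simp: square_integrable_def)
  have "AE w in M. cond_G (X eps (\<lambda>t w. u1 t w + c *\<^sub>R v1 t w) (\<lambda>t w. u2 t w + c *\<^sub>R v2 t w) t) w
      = cond_G (X eps u1 u2 t) w + c *\<^sub>R cond_G (response v1 v2 t) w"
    by (rule G.vcond_exp_linear[OF x square_integrable_response[OF v] _ Suc.IH])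
      (use eps in measurable)
  moreover have "AE w in M. cond_G (\<lambda>w. u1 t w + c *\<^sub>R v1 t w) w = cond_G (u1 t) w + c *\<^sub>R cond_G (v1 t) w"
    by (rule G.vcond_exp_linear[OF u(1) v(1)]) auto
  moreover have "AE w in M. cond_G (\<lambda>w. u2 t w + c *\<^sub>R v2 t w) w = cond_G (u2 t) w + c *\<^sub>R cond_G (v2 t) w"
    by (rule G.vcond_exp_linear[OF u(2) v(2)]) auto
  ultimately show ?case using Suc.IH
    by eventually_elim
      (simp add: state.simps matrix_vector_right_distrib matrix_vector_mult_scaleR algebra_simps)
qed simp

lemma discounted_dominated_mf_bilinear:
  fixes x y :: "nat \<Rightarrow> 'w \<Rightarrow> real^'n"
  assumes x: "discounted_L2 x" and y: "discounted_L2 y"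
  shows "discounted_dominated (\<lambda>t. mf_bilinear P Pb (x t) (y t))"
proof (rule discounted_dominated_mono[OF _ _ abs_mf_bilinear_le])
  show "discounted_dominated (\<lambda>t w. (2 * mat_norm P + mat_norm (P + Pb)) *
     ((norm (x t w))\<^sup>2 + (norm (cond_G (x t) w))\<^sup>2 + (norm (y t w))\<^sup>2 + (norm (cond_G (y t) w))\<^sup>2))"
    by (intro discounted_dominated_cmult discounted_dominated_add discounted_dominated_norm_sq
        discounted_L2_vcond_exp x y)
  show "mf_bilinear P Pb (x t) (y t) \<in> borel_measurable M" for t
    using discounted_L2_measurable[OF x] discounted_L2_measurable[OF y] by measurable
qed

lemma discounted_dominated_cost_bilinear:
  assumes "discounted_L2 x" "discounted_L2 v1" "discounted_L2 v2"
    and "discounted_L2 y" "discounted_L2 z1" "discounted_L2 z2"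
  shows "discounted_dominated (\<lambda>t. cost_bilinear (x t) (v1 t) (v2 t) (y t) (z1 t) (z2 t))"
  unfolding cost_bilinear_def
  by (intro discounted_dominated_add discounted_dominated_diff discounted_dominated_mf_bilinear assms)

lemma integrable_mf_bilinear:
  fixes x y :: "'w \<Rightarrow> real^'n"
  assumes x: "square_integrable M x" and y: "square_integrable M y"
  shows "integrable M (mf_bilinear P Pb x y)"
proof (rule Bochner_Integration.integrable_bound[where f="\<lambda>w. (2 * mat_norm P + mat_norm (P + Pb)) *
     ((norm (x w))\<^sup>2 + (norm (cond_G x w))\<^sup>2 + (norm (y w))\<^sup>2 + (norm (cond_G y w))\<^sup>2)"])
  show "integrable M (\<lambda>w. (2 * mat_norm P + mat_norm (P + Pb)) *
     ((norm (x w))\<^sup>2 + (norm (cond_G x w))\<^sup>2 + (norm (y w))\<^sup>2 + (norm (cond_G y w))\<^sup>2))"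
    using square_integrable_norm_sq[OF x] square_integrable_norm_sq[OF y]
      square_integrable_norm_sq[OF G.square_integrable_vcond_exp[OF x]]
      square_integrable_norm_sq[OF G.square_integrable_vcond_exp[OF y]] by simp
  show "mf_bilinear P Pb x y \<in> borel_measurable M"
    using x y by (auto simp: square_integrable_def)
  show "AE w in M. norm (mf_bilinear P Pb x y w) \<le> norm ((2 * mat_norm P + mat_norm (P + Pb)) *
     ((norm (x w))\<^sup>2 + (norm (cond_G x w))\<^sup>2 + (norm (y w))\<^sup>2 + (norm (cond_G y w))\<^sup>2))"
    using abs_mf_bilinear_le[of P Pb x y] by (intro AE_I2) (simp add: order_trans[OF _ abs_ge_self])
qed

lemma integral_mf_bilinear:
  fixes x y :: "'w \<Rightarrow> real^'n"
  assumes x: "square_integrable M x" and y: "square_integrable M y" and P: "symm P" "symm Pb"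
  shows "(\<integral>w. mf_bilinear P Pb x y w \<partial>M) = (\<integral>w. (P *v x w + Pb *v cond_G x w) \<bullet> y w \<partial>M)"
proof -
  have x': "square_integrable M (cond_G x)" and y': "square_integrable M (cond_G y)"
    using G.square_integrable_vcond_exp x y by auto
  have Py: "square_integrable M (\<lambda>w. S *v y w)" "square_integrable M (\<lambda>w. S *v cond_G y w)" for S :: "real^'n^'n"
    using square_integrable_matrix_vector_mult x y y' by auto
  have cond_both: "(\<integral>w. cond_G x w \<bullet> (S *v cond_G y w) \<partial>M) = (\<integral>w. cond_G x w \<bullet> (S *v y w) \<partial>M)"
    for S :: "real^'n^'n"
  proof -
    have "(\<integral>w. cond_G x w \<bullet> (S *v cond_G y w) \<partial>M) = (\<integral>w. cond_G x w \<bullet> cond_G (\<lambda>w. S *v y w) w \<partial>M)"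
      by (rule integral_cong_AE)
        (use G.vcond_exp_matrix_vector_mult[OF y, of S] y in \<open>auto simp: square_integrable_def\<close>)
    also have "\<dots> = (\<integral>w. cond_G x w \<bullet> (S *v y w) \<partial>M)"
      by (rule G.integral_inner_vcond_exp_F_meas[OF x' _ Py(1)]) simp
    finally show ?thesis .
  qed
  have "(\<integral>w. mf_bilinear P Pb x y w \<partial>M) = (\<integral>w. x w \<bullet> (P *v y w) \<partial>M) - (\<integral>w. x w \<bullet> (P *v cond_G y w) \<partial>M)
      - (\<integral>w. cond_G x w \<bullet> (P *v y w) \<partial>M) + 2 * (\<integral>w. cond_G x w \<bullet> (P *v cond_G y w) \<partial>M)
      + (\<integral>w. cond_G x w \<bullet> (Pb *v cond_G y w) \<partial>M)"
    unfolding mf_bilinear_def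
    using integrable_inner_square_integrable[OF x Py(1)] integrable_inner_square_integrable[OF x Py(2)]
      integrable_inner_square_integrable[OF x' Py(1)] integrable_inner_square_integrable[OF x' Py(2)]
    by (simp add: inner_diff_left inner_diff_right matrix_vector_mult_diff_distrib
        matrix_vector_mult_add_rdistrib inner_add_right)
  also have "\<dots> = (\<integral>w. x w \<bullet> (P *v y w) \<partial>M) + (\<integral>w. cond_G x w \<bullet> (Pb *v y w) \<partial>M)"
    unfolding cond_both G.integral_inner_matrix_vcond_exp[OF x y] by simp
  also have "\<dots> = (\<integral>w. x w \<bullet> (P *v y w) + cond_G x w \<bullet> (Pb *v y w) \<partial>M)"
    using integrable_inner_square_integrable[OF x Py(1)] integrable_inner_square_integrable[OF x' Py(1)]
    by simp
  also have "\<dots> = (\<integral>w. (P *v x w + Pb *v cond_G x w) \<bullet> y w \<partial>M)"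
  proof (rule Bochner_Integration.integral_cong[OF refl])
    fix w
    have "(S *v a) \<bullet> b = a \<bullet> (S *v b)" if "symm S" for S and a b :: "real^'n"
      using symm_inner_commute[OF that, of b a] by (simp add: inner_commute)
    then show "x w \<bullet> (P *v y w) + cond_G x w \<bullet> (Pb *v y w) = (P *v x w + Pb *v cond_G x w) \<bullet> y w"
      using P by (simp add: inner_add_left)
  qed
  finally show ?thesis .
qed

lemma integral_inner_mean_field_transpose:
  fixes p :: "'w \<Rightarrow> real^'d" and v :: "'w \<Rightarrow> real^'l" and B Bb :: "real^'l^'d"
  assumes p: "square_integrable M p" and v: "square_integrable M v"
  shows "(\<integral>w. p w \<bullet> (B *v v w + Bb *v cond_G v w) \<partial>M)
    = (\<integral>w. (transpose B *v p w + transpose Bb *v cond_G p w) \<bullet> v w \<partial>M)"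
proof -
  have Bv: "square_integrable M (\<lambda>w. S *v v w)" for S :: "real^'l^'d"
    by (rule square_integrable_matrix_vector_mult[OF v])
  have "(\<integral>w. p w \<bullet> (B *v v w + Bb *v cond_G v w) \<partial>M)
      = (\<integral>w. p w \<bullet> (B *v v w) \<partial>M) + (\<integral>w. p w \<bullet> (Bb *v cond_G v w) \<partial>M)"
    using integrable_inner_square_integrable[OF p Bv]
      integrable_inner_square_integrable[OF p square_integrable_matrix_vector_mult[OF G.square_integrable_vcond_exp[OF v]]]
    by (simp add: inner_add_right)
  also have "\<dots> = (\<integral>w. p w \<bullet> (B *v v w) \<partial>M) + (\<integral>w. cond_G p w \<bullet> (Bb *v v w) \<partial>M)"
    unfolding G.integral_inner_matrix_vcond_exp[OF p v] ..
  also have "\<dots> = (\<integral>w. (transpose B *v p w + transpose Bb *v cond_G p w) \<bullet> v w \<partial>M)"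
    using integrable_inner_square_integrable[OF p Bv]
      integrable_inner_square_integrable[OF G.square_integrable_vcond_exp[OF p] Bv]
    by (simp add: inner_add_left dot_lmul_matrix)
  finally show ?thesis .
qed

lemma AE_cost_state_add_scaleR:
  fixes u1 u2 v1 v2 :: "nat \<Rightarrow> 'w \<Rightarrow> real^'l" and eps :: "nat \<Rightarrow> 'w \<Rightarrow> real^'d"
  assumes eps: "\<And>t. eps t \<in> borel_measurable M"
    and u: "\<And>t. square_integrable M (u1 t)" "\<And>t. square_integrable M (u2 t)"
    and v: "\<And>t. square_integrable M (v1 t)" "\<And>t. square_integrable M (v2 t)"
    and x: "\<And>t. square_integrable M (X eps u1 u2 t)"
  shows "AE w in M. cost (X eps (\<lambda>t w. u1 t w + c *\<^sub>R v1 t w) (\<lambda>t w. u2 t w + c *\<^sub>R v2 t w) t)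
      (\<lambda>w. u1 t w + c *\<^sub>R v1 t w) (\<lambda>w. u2 t w + c *\<^sub>R v2 t w) w
    = cost (X eps u1 u2 t) (u1 t) (u2 t) w
      + 2 * c * cost_bilinear (X eps u1 u2 t) (u1 t) (u2 t) (response v1 v2 t) (v1 t) (v2 t) w
      + c\<^sup>2 * cost (response v1 v2 t) (v1 t) (v2 t) w"
proof -
  let ?u1 = "\<lambda>t w. u1 t w + c *\<^sub>R v1 t w" and ?u2 = "\<lambda>t w. u2 t w + c *\<^sub>R v2 t w"
  have [measurable]: "\<And>t. u1 t \<in> borel_measurable M" "\<And>t. u2 t \<in> borel_measurable M"
    "\<And>t. v1 t \<in> borel_measurable M" "\<And>t. v2 t \<in> borel_measurable M" "\<And>t. eps t \<in> borel_measurable M"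
    using u v eps by (auto simp: square_integrable_def)
  have state: "AE w in M. X eps ?u1 ?u2 t w = X eps u1 u2 t w + c *\<^sub>R response v1 v2 t w"
    by (rule state_add_scaleR[OF eps u v x])
  have "AE w in M. cond_G (X eps ?u1 ?u2 t) w = cond_G (X eps u1 u2 t) w + c *\<^sub>R cond_G (response v1 v2 t) w"
    by (rule G.vcond_exp_linear[OF x square_integrable_response[OF v] _ state]) measurable
  moreover have "AE w in M. cond_G (?u1 t) w = cond_G (u1 t) w + c *\<^sub>R cond_G (v1 t) w"
    by (rule G.vcond_exp_linear[OF u(1) v(1)]) auto
  moreover have "AE w in M. cond_G (?u2 t) w = cond_G (u2 t) w + c *\<^sub>R cond_G (v2 t) w"
    by (rule G.vcond_exp_linear[OF u(2) v(2)]) auto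
  ultimately show ?thesis using state
    by eventually_elim (rule cost_add_scaleR; simp)
qed

lemma J_add_scaleR:
  fixes u1 u2 v1 v2 :: "nat \<Rightarrow> 'w \<Rightarrow> real^'l" and eps :: "nat \<Rightarrow> 'w \<Rightarrow> real^'d"
  assumes eps: "\<And>t. eps t \<in> borel_measurable M"
    and u: "discounted_L2 u1" "discounted_L2 u2" and v: "discounted_L2 v1" "discounted_L2 v2"
    and x: "discounted_L2 (X eps u1 u2)" and d: "discounted_L2 (response v1 v2)"
  shows "J eps (\<lambda>t w. u1 t w + c *\<^sub>R v1 t w) (\<lambda>t w. u2 t w + c *\<^sub>R v2 t w)
    = J eps u1 u2
      + 2 * c * (\<Sum>t. \<gamma>^t * (\<integral>w. cost_bilinear (X eps u1 u2 t) (u1 t) (u2 t) (response v1 v2 t) (v1 t) (v2 t) w \<partial>M))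
      + c\<^sup>2 * J (\<lambda>t w. 0) v1 v2"
proof -
  let ?u1 = "\<lambda>t w. u1 t w + c *\<^sub>R v1 t w" and ?u2 = "\<lambda>t w. u2 t w + c *\<^sub>R v2 t w"
  define base where "base = (\<lambda>t w. cost (X eps u1 u2 t) (u1 t) (u2 t) w)"
  define lin where "lin = (\<lambda>t w. cost_bilinear (X eps u1 u2 t) (u1 t) (u2 t) (response v1 v2 t) (v1 t) (v2 t) w)"
  define quad where "quad = (\<lambda>t w. cost (response v1 v2 t) (v1 t) (v2 t) w)"
  note sq = discounted_L2_square_integrable[OF u(1)] discounted_L2_square_integrable[OF u(2)]
    discounted_L2_square_integrable[OF v(1)] discounted_L2_square_integrable[OF v(2)]
    discounted_L2_square_integrable[OF x]
  have [measurable]: "\<And>t. u1 t \<in> borel_measurable M" "\<And>t. u2 t \<in> borel_measurable M"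
    "\<And>t. v1 t \<in> borel_measurable M" "\<And>t. v2 t \<in> borel_measurable M" "\<And>t. eps t \<in> borel_measurable M"
    using u v eps by (auto intro: discounted_L2_measurable)
  have "discounted_dominated base" "discounted_dominated lin" "discounted_dominated quad"
    unfolding base_def lin_def quad_def run_cost_eq_cost_bilinear
    by (intro discounted_dominated_cost_bilinear x u v d)+
  note base = discounted_dominated_integral_suminf[OF this(1)]
    and lin = discounted_dominated_integral_suminf[OF this(2)]
    and quad = discounted_dominated_integral_suminf[OF this(3)]
  have "AE w in M. \<forall>t. cost (X eps ?u1 ?u2 t) (?u1 t) (?u2 t) w = base t w + 2 * c * lin t w + c\<^sup>2 * quad t w"
    unfolding AE_all_countable base_def lin_def quad_def
    by (intro allI AE_cost_state_add_scaleR[OF eps sq])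
  with base(2) lin(2) quad(2)
  have "AE w in M. (\<Sum>t. \<gamma>^t * cost (X eps ?u1 ?u2 t) (?u1 t) (?u2 t) w)
      = (\<Sum>t. \<gamma>^t * base t w) + 2 * c * (\<Sum>t. \<gamma>^t * lin t w) + c\<^sup>2 * (\<Sum>t. \<gamma>^t * quad t w)"
  proof eventually_elim
    case (elim w)
    have "(\<lambda>t. \<gamma>^t * base t w + 2 * c * (\<gamma>^t * lin t w) + c\<^sup>2 * (\<gamma>^t * quad t w)) sums
        ((\<Sum>t. \<gamma>^t * base t w) + 2 * c * (\<Sum>t. \<gamma>^t * lin t w) + c\<^sup>2 * (\<Sum>t. \<gamma>^t * quad t w))"
      by (intro sums_add sums_mult summable_sums elim)
    then show ?case
      using elim(4) by (simp add: sums_iff algebra_simps)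
  qed
  then have "J eps ?u1 ?u2 = (\<integral>w. (\<Sum>t. \<gamma>^t * base t w) + 2 * c * (\<Sum>t. \<gamma>^t * lin t w)
      + c\<^sup>2 * (\<Sum>t. \<gamma>^t * quad t w) \<partial>M)"
    unfolding J_def
    by (intro integral_cong_AE) (use base(3) lin(3) quad(3) in \<open>auto intro: borel_measurable_integrable\<close>)
  also have "\<dots> = J eps u1 u2 + 2 * c * (\<Sum>t. \<gamma>^t * (\<integral>w. lin t w \<partial>M)) + c\<^sup>2 * J (\<lambda>t w. 0) v1 v2"
    using base(3) lin(3) quad(3) by (simp add: J_def base_def quad_def lin(4))
  finally show ?thesis unfolding lin_def .
qed

lemma ae_F_measurable_response:
  assumes adapted: "\<And>t. v1 t \<in> borel_measurable (F t)" "\<And>t. v2 t \<in> borel_measurable (F t)"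
    and sq: "\<And>t. square_integrable M (v1 t)" "\<And>t. square_integrable M (v2 t)"
  shows "ae_F_measurable t (response v1 v2 (Suc t))"
proof -
  have step: "ae_F_measurable t (response v1 v2 (Suc t))"
    if "ae_F_measurable t (response v1 v2 t)" for t
    by (simp only: state.simps add_0_right)
      (intro ae_F_measurable_add ae_F_measurable_matrix_vector_mult ae_F_measurable_vcond_exp that
        ae_F_measurableI[OF adapted(1)] ae_F_measurableI[OF adapted(2)] sq square_integrable_response)
  have "ae_F_measurable t (response v1 v2 t)" for t
  proof (induction t)
    case 0
    show ?case by (simp add: ae_F_measurableI)
  next
    case (Suc t)
    show ?case by (rule ae_F_measurable_mono[OF _ step[OF Suc]]) simp
  qed
  then show ?thesis by (rule step)
qed

lemma response_impulse_after:
  fixes v1 v2 :: "'w \<Rightarrow> real^'l"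
  assumes v: "square_integrable M v1" "square_integrable M v2" and "s < t"
  defines "d \<equiv> response (impulse s v1) (impulse s v2)"
  shows "AE w in M. cond_G (d (Suc t)) w = (A + Ab) *v cond_G (d t) w \<and>
    d (Suc t) w - cond_G (d (Suc t)) w = A *v (d t w - cond_G (d t) w)"
proof -
  have sq: "square_integrable M (d n)" "square_integrable M (cond_G (d n))" for n
    unfolding d_def using v
    by (auto intro!: square_integrable_response G.square_integrable_vcond_exp
        simp: impulse_def square_integrable_zero)
  have [measurable]: "d n \<in> borel_measurable M" "cond_G (d n) \<in> borel_measurable M" for n
    using sq by (auto simp: square_integrable_def)
  have d: "AE w in M. d (Suc t) w = A *v d t w + Ab *v cond_G (d t) w"
    using G.vcond_exp_zero[where 'k='l]
    by eventually_elim (use \<open>s < t\<close> in \<open>simp add: d_def state.simps\<close>)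
  have "AE w in M. cond_G (d (Suc t)) w = cond_G (\<lambda>w. A *v d t w + Ab *v cond_G (d t) w) w"
    by (rule G.vcond_exp_AE_cong[OF d]) measurable
  moreover note G.vcond_exp_add[OF square_integrable_matrix_vector_mult[where A=A, OF sq(1)[of t]]
      square_integrable_matrix_vector_mult[where A=Ab, OF sq(2)[of t]]]
    G.vcond_exp_matrix_vector_mult[OF sq(1)[of t], of A]
    G.vcond_exp_matrix_vector_mult[OF sq(2)[of t], of Ab]
    G.vcond_exp_F_meas[OF sq(2)[of t] borel_measurable_vcond_exp]
  ultimately show ?thesis using d
    by eventually_elim (simp add: matrix_vector_mult_add_rdistrib matrix_vector_right_distrib
        matrix_vector_mult_diff_distrib algebra_simps)
qed

lemma integral_norm_sq_response_impulse_le: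
  fixes s :: nat and v1 v2 :: "'w \<Rightarrow> real^'l"
  assumes v: "square_integrable M v1" "square_integrable M v2"
  defines "d \<equiv> response (impulse s v1) (impulse s v2)"
  shows "(\<integral>w. (norm (d (Suc s + k) w))\<^sup>2 \<partial>M)
    \<le> 2 * ((mat_norm A)\<^sup>2)^k * (\<integral>w. (norm (d (Suc s) w - cond_G (d (Suc s)) w))\<^sup>2 \<partial>M)
      + 2 * ((mat_norm (A + Ab))\<^sup>2)^k * (\<integral>w. (norm (cond_G (d (Suc s)) w))\<^sup>2 \<partial>M)"
proof -
  have sq: "square_integrable M (d t)" "square_integrable M (cond_G (d t))" for t
    unfolding d_def using v
    by (auto intro!: square_integrable_response G.square_integrable_vcond_exp
        simp: impulse_def square_integrable_zero)
  have after: "AE w in M. cond_G (d (Suc (Suc s + k))) w = (A + Ab) *v cond_G (d (Suc s + k)) w \<and>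
      d (Suc (Suc s + k)) w - cond_G (d (Suc (Suc s + k))) w = A *v (d (Suc s + k) w - cond_G (d (Suc s + k)) w)"
    for k unfolding d_def by (rule response_impulse_after[OF v]) simp
  have mean: "AE w in M. (norm (cond_G (d (Suc s + k)) w))\<^sup>2
      \<le> ((mat_norm (A + Ab))\<^sup>2)^k * (norm (cond_G (d (Suc s)) w))\<^sup>2"
    using AE_norm_sq_iterate_le[where y="\<lambda>k. cond_G (d (Suc s + k))" and S="A + Ab"] after
    by (simp add: eventually_conj_iff)
  have fluct: "AE w in M. (norm (d (Suc s + k) w - cond_G (d (Suc s + k)) w))\<^sup>2
      \<le> ((mat_norm A)\<^sup>2)^k * (norm (d (Suc s) w - cond_G (d (Suc s)) w))\<^sup>2"
    using AE_norm_sq_iterate_le[where y="\<lambda>k w. d (Suc s + k) w - cond_G (d (Suc s + k)) w" and S=A] after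
    by (simp add: eventually_conj_iff)
  note int = square_integrable_norm_sq[OF square_integrable_diff[OF sq(1,2)], of "Suc s"]
    square_integrable_norm_sq[OF sq(2), of "Suc s"]
  have "(\<integral>w. (norm (d (Suc s + k) w))\<^sup>2 \<partial>M)
      \<le> (\<integral>w. 2 * (((mat_norm A)\<^sup>2)^k * (norm (d (Suc s) w - cond_G (d (Suc s)) w))\<^sup>2)
        + 2 * (((mat_norm (A + Ab))\<^sup>2)^k * (norm (cond_G (d (Suc s)) w))\<^sup>2) \<partial>M)"
  proof (rule integral_mono_AE[OF square_integrable_norm_sq[OF sq(1)]])
    show "AE w in M. (norm (d (Suc s + k) w))\<^sup>2
        \<le> 2 * (((mat_norm A)\<^sup>2)^k * (norm (d (Suc s) w - cond_G (d (Suc s)) w))\<^sup>2)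
          + 2 * (((mat_norm (A + Ab))\<^sup>2)^k * (norm (cond_G (d (Suc s)) w))\<^sup>2)"
      using mean fluct
    proof eventually_elim
      case (elim w)
      then show ?case
        using norm_add_sq_le[of "d (Suc s + k) w - cond_G (d (Suc s + k)) w" "cond_G (d (Suc s + k)) w"]
        by simp
    qed
  qed (use int in simp)
  also have "\<dots> = 2 * ((mat_norm A)\<^sup>2)^k * (\<integral>w. (norm (d (Suc s) w - cond_G (d (Suc s)) w))\<^sup>2 \<partial>M)
      + 2 * ((mat_norm (A + Ab))\<^sup>2)^k * (\<integral>w. (norm (cond_G (d (Suc s)) w))\<^sup>2 \<partial>M)"
    using int by simp
  finally show ?thesis .
qed

lemma discounted_L2_response_impulse:
  fixes v1 v2 :: "'w \<Rightarrow> real^'l"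
  assumes v: "square_integrable M v1" "square_integrable M v2"
  shows "discounted_L2 (response (impulse s v1) (impulse s v2))"
proof -
  define d where "d = response (impulse s v1) (impulse s v2)"
  define a1 where "a1 = (mat_norm A)\<^sup>2"
  define a2 where "a2 = (mat_norm (A + Ab))\<^sup>2"
  define E1 where "E1 = (\<integral>w. (norm (d (Suc s) w - cond_G (d (Suc s)) w))\<^sup>2 \<partial>M)"
  define E2 where "E2 = (\<integral>w. (norm (cond_G (d (Suc s)) w))\<^sup>2 \<partial>M)"
  have bound: "(\<integral>w. (norm (d (Suc s + k) w))\<^sup>2 \<partial>M) \<le> 2 * a1^k * E1 + 2 * a2^k * E2" for k
    unfolding d_def a1_def a2_def E1_def E2_def by (rule integral_norm_sq_response_impulse_le[OF v])
  have "0 \<le> E1" "0 \<le> E2" unfolding E1_def E2_def by (auto intro!: integral_nonneg_AE)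
  have "summable (\<lambda>k. 2 * E1 * (\<gamma> * a1)^k + 2 * E2 * (\<gamma> * a2)^k)"
    using discounted_stable discount_pos unfolding a1_def a2_def
    by (intro summable_add summable_mult summable_geometric) auto
  then have "summable (\<lambda>k. \<gamma>^(k + Suc s) * (\<integral>w. (norm (d (k + Suc s) w))\<^sup>2 \<partial>M))"
  proof (rule summable_comparison_test'[where N=0])
    fix k :: nat
    have "\<gamma>^Suc s \<le> 1"
      using discount_pos discount_le_1 by (intro power_le_one) auto
    then have "\<gamma>^(k + Suc s) \<le> \<gamma>^k"
      unfolding power_add by (rule mult_left_le[OF _ discount_power_nonneg])
    then have "\<gamma>^(k + Suc s) * (\<integral>w. (norm (d (k + Suc s) w))\<^sup>2 \<partial>M) \<le> \<gamma>^k * (2 * a1^k * E1 + 2 * a2^k * E2)"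
      using bound[of k] discount_pos by (intro mult_mono) (auto simp: add.commute intro!: integral_nonneg_AE)
    also have "\<dots> = 2 * E1 * (\<gamma> * a1)^k + 2 * E2 * (\<gamma> * a2)^k"
      by (simp add: power_mult_distrib algebra_simps)
    finally show "norm (\<gamma>^(k + Suc s) * (\<integral>w. (norm (d (k + Suc s) w))\<^sup>2 \<partial>M))
        \<le> 2 * E1 * (\<gamma> * a1)^k + 2 * E2 * (\<gamma> * a2)^k"
      using discount_pos by (simp add: integral_nonneg_AE)
  qed
  then have "summable (\<lambda>t. \<gamma>^t * (\<integral>w. (norm (d t w))\<^sup>2 \<partial>M))"
    by (rule summable_iff_shift[THEN iffD1])
  moreover have "square_integrable M (d t)" for t
    unfolding d_def using v
    by (auto intro!: square_integrable_response simp: impulse_def square_integrable_zero)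
  ultimately show ?thesis unfolding d_def discounted_L2_def by blast
qed

lemma integral_cost_bilinear:
  assumes "square_integrable M x" "square_integrable M u1" "square_integrable M u2"
    and "square_integrable M y" "square_integrable M z1" "square_integrable M z2"
  shows "(\<integral>w. cost_bilinear x u1 u2 y z1 z2 w \<partial>M)
    = (\<integral>w. (Q *v x w + Qb *v cond_G x w) \<bullet> y w \<partial>M)
      + (\<integral>w. (R1 *v u1 w + Rb1 *v cond_G u1 w) \<bullet> z1 w \<partial>M)
      - (\<integral>w. (R2 *v u2 w + Rb2 *v cond_G u2 w) \<bullet> z2 w \<partial>M)"
  unfolding cost_bilinear_def
  using integrable_mf_bilinear[OF assms(1,4)] integrable_mf_bilinear[OF assms(2,5)]
    integrable_mf_bilinear[OF assms(3,6)]
  by (simp add: integral_mf_bilinear assms symm_Q symm_R)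

end

section \<open>Adjoint process and first-order conditions\<close>

locale lq_open_loop = lq_game M G F \<gamma> A Ab Q Qb B1 Bb1 B2 Bb2 R1 Rb1 R2 Rb2
  for M :: "'w measure" and G F \<gamma> and A Ab Q Qb :: "real^'d^'d" and B1 Bb1 B2 Bb2 :: "real^'l^'d"
    and R1 Rb1 R2 Rb2 :: "real^'l^'l" +
  fixes eps :: "nat \<Rightarrow> 'w \<Rightarrow> real^'d" and u1 u2 :: "nat \<Rightarrow> 'w \<Rightarrow> real^'l"
    and p :: "nat \<Rightarrow> 'w \<Rightarrow> real^'d"
  assumes eps_measurable: "\<And>t. eps t \<in> borel_measurable M"
    and proc_u1: "proc_class M F \<gamma> u1" and proc_u2: "proc_class M F \<gamma> u2"
    and proc_state: "proc_class M F \<gamma> (X eps u1 u2)" and proc_p: "proc_class M F \<gamma> p"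
    and adjoint: "\<And>t. AE w in M. p t w = \<gamma> *\<^sub>R vcond_exp M (F t)
         (\<lambda>v. transpose A *v p (Suc t) v + 2 *\<^sub>R (Q *v X eps u1 u2 (Suc t) v)
            + transpose Ab *v cond_G (p (Suc t)) v + 2 *\<^sub>R (Qb *v cond_G (X eps u1 u2 (Suc t)) v)) w"
begin

definition grad1 :: "nat \<Rightarrow> 'w \<Rightarrow> real^'l" where
  "grad1 s w = transpose B1 *v p s w + 2 *\<^sub>R (R1 *v u1 s w)
     + transpose Bb1 *v cond_G (p s) w + 2 *\<^sub>R (Rb1 *v cond_G (u1 s) w)"

definition grad2 :: "nat \<Rightarrow> 'w \<Rightarrow> real^'l" where
  "grad2 s w = transpose B2 *v p s w - 2 *\<^sub>R (R2 *v u2 s w)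
     + transpose Bb2 *v cond_G (p s) w - 2 *\<^sub>R (Rb2 *v cond_G (u2 s) w)"

lemma discounted_L2_u1: "discounted_L2 u1" and discounted_L2_u2: "discounted_L2 u2"
  and discounted_L2_state: "discounted_L2 (X eps u1 u2)" and discounted_L2_p: "discounted_L2 p"
  using proc_class_imp_discounted_L2 proc_u1 proc_u2 proc_state proc_p by auto

lemma adapted_u1: "u1 t \<in> borel_measurable (F t)" and adapted_u2: "u2 t \<in> borel_measurable (F t)"
  and adapted_p: "p t \<in> borel_measurable (F t)"
  using proc_u1 proc_u2 proc_p by (auto simp: proc_class_def)

lemma square_integrable_grad1: "square_integrable M (grad1 s)"
  and square_integrable_grad2: "square_integrable M (grad2 s)"
  using discounted_L2_square_integrable[OF discounted_L2_p]
    discounted_L2_square_integrable[OF discounted_L2_u1]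
    discounted_L2_square_integrable[OF discounted_L2_u2]
  unfolding grad1_def[abs_def] grad2_def[abs_def]
  by (intro square_integrable_add square_integrable_diff square_integrable_matrix_vector_mult
      square_integrable_scaleR G.square_integrable_vcond_exp; simp)+

lemma ae_F_measurable_grad1: "ae_F_measurable s (grad1 s)"
  and ae_F_measurable_grad2: "ae_F_measurable s (grad2 s)"
  using discounted_L2_square_integrable[OF discounted_L2_p]
    discounted_L2_square_integrable[OF discounted_L2_u1]
    discounted_L2_square_integrable[OF discounted_L2_u2]
  unfolding grad1_def[abs_def] grad2_def[abs_def]
  by (intro ae_F_measurable_add ae_F_measurable_diff ae_F_measurable_matrix_vector_mult
      ae_F_measurable_scaleR ae_F_measurable_vcond_exp ae_F_measurableI adapted_u1 adapted_u2 adapted_p;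
      simp)+

text \<open>The adjoint equation in weak form: tested against an \<open>F\<^sub>t\<close>-measurable \<open>f\<close>, the conditional
  expectation \<open>E[\<cdot> | F\<^sub>t]\<close> in it can be dropped.\<close>

lemma integral_inner_adjoint:
  fixes f :: "'w \<Rightarrow> real^'d"
  assumes f: "ae_F_measurable t f" "square_integrable M f"
  shows "(\<integral>w. p t w \<bullet> f w \<partial>M)
    = \<gamma> * ((\<integral>w. p (Suc t) w \<bullet> (A *v f w + Ab *v cond_G f w) \<partial>M)
      + 2 * (\<integral>w. (Q *v X eps u1 u2 (Suc t) w + Qb *v cond_G (X eps u1 u2 (Suc t)) w) \<bullet> f w \<partial>M))"
proof -
  let ?x = "X eps u1 u2 (Suc t)"
  define Z where "Z = (\<lambda>v. transpose A *v p (Suc t) v + 2 *\<^sub>R (Q *v ?x v)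
    + transpose Ab *v cond_G (p (Suc t)) v + 2 *\<^sub>R (Qb *v cond_G ?x v))"
  have p: "square_integrable M (p n)" for n
    by (rule discounted_L2_square_integrable[OF discounted_L2_p])
  have x: "square_integrable M ?x"
    by (rule discounted_L2_square_integrable[OF discounted_L2_state])
  have [measurable]: "p t \<in> borel_measurable M" "f \<in> borel_measurable M"
    using p f(2) by (auto simp: square_integrable_def)
  note p' = G.square_integrable_vcond_exp[OF p] and x' = G.square_integrable_vcond_exp[OF x]
    and f' = G.square_integrable_vcond_exp[OF f(2)]
  note sq_mult = square_integrable_matrix_vector_mult and int = integrable_inner_square_integrable
  have Z: "square_integrable M Z"
    unfolding Z_def by (intro square_integrable_add sq_mult square_integrable_scaleR p p' x x')
  have "(\<integral>w. p t w \<bullet> f w \<partial>M) = (\<integral>w. (\<gamma> *\<^sub>R vcond_exp M (F t) Z w) \<bullet> f w \<partial>M)"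
    by (rule integral_cong_AE) (use adjoint[of t] in \<open>auto simp: Z_def\<close>)
  also have "\<dots> = \<gamma> * (\<integral>w. f w \<bullet> vcond_exp M (F t) Z w \<partial>M)"
    by (simp add: inner_commute)
  also have "\<dots> = \<gamma> * (\<integral>w. f w \<bullet> Z w \<partial>M)"
    by (simp only: integral_inner_vcond_exp_F[OF f Z])
  also have "(\<integral>w. f w \<bullet> Z w \<partial>M) = (\<integral>w. p (Suc t) w \<bullet> (A *v f w) \<partial>M)
      + (\<integral>w. cond_G (p (Suc t)) w \<bullet> (Ab *v f w) \<partial>M)
      + 2 * (\<integral>w. (Q *v ?x w + Qb *v cond_G ?x w) \<bullet> f w \<partial>M)"
  proof -
    have "f w \<bullet> Z w = p (Suc t) w \<bullet> (A *v f w) + cond_G (p (Suc t)) w \<bullet> (Ab *v f w)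
        + 2 * ((Q *v ?x w + Qb *v cond_G ?x w) \<bullet> f w)" for w
      unfolding inner_commute[of "f w"] Z_def by (simp add: inner_add_left dot_lmul_matrix)
    then show ?thesis
      using int[OF p sq_mult[OF f(2)]] int[OF p' sq_mult[OF f(2)]]
        int[OF square_integrable_add[OF sq_mult[OF x] sq_mult[OF x']] f(2)]
      by simp
  qed
  also have "(\<integral>w. cond_G (p (Suc t)) w \<bullet> (Ab *v f w) \<partial>M) = (\<integral>w. p (Suc t) w \<bullet> (Ab *v cond_G f w) \<partial>M)"
    by (rule G.integral_inner_matrix_vcond_exp[OF p f(2), symmetric])
  finally show ?thesis
    using int[OF p sq_mult[OF f(2)]] int[OF p sq_mult[OF f']] by (simp add: inner_add_right algebra_simps)
qed

lemma integral_adjoint_response_step: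
  fixes v1 v2 :: "nat \<Rightarrow> 'w \<Rightarrow> real^'l"
  assumes adapted: "\<And>t. v1 t \<in> borel_measurable (F t)" "\<And>t. v2 t \<in> borel_measurable (F t)"
    and sq: "\<And>t. square_integrable M (v1 t)" "\<And>t. square_integrable M (v2 t)"
  defines "d \<equiv> response v1 v2"
  shows "(\<integral>w. p t w \<bullet> (A *v d t w + Ab *v cond_G (d t) w) \<partial>M)
      + ((\<integral>w. p t w \<bullet> (B1 *v v1 t w + Bb1 *v cond_G (v1 t) w) \<partial>M)
        + (\<integral>w. p t w \<bullet> (B2 *v v2 t w + Bb2 *v cond_G (v2 t) w) \<partial>M))
    = \<gamma> * ((\<integral>w. p (Suc t) w \<bullet> (A *v d (Suc t) w + Ab *v cond_G (d (Suc t)) w) \<partial>M)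
      + 2 * (\<integral>w. (Q *v X eps u1 u2 (Suc t) w + Qb *v cond_G (X eps u1 u2 (Suc t)) w) \<bullet> d (Suc t) w \<partial>M))"
proof -
  have p: "square_integrable M (p t)"
    by (rule discounted_L2_square_integrable[OF discounted_L2_p])
  have d: "square_integrable M (d n)" for n
    unfolding d_def by (rule square_integrable_response[OF sq])
  have int: "integrable M (\<lambda>w. p t w \<bullet> (A *v d t w + Ab *v cond_G (d t) w))"
    "integrable M (\<lambda>w. p t w \<bullet> (B1 *v v1 t w + Bb1 *v cond_G (v1 t) w))"
    "integrable M (\<lambda>w. p t w \<bullet> (B2 *v v2 t w + Bb2 *v cond_G (v2 t) w))"
    by (intro integrable_inner_square_integrable p square_integrable_add
        square_integrable_matrix_vector_mult d G.square_integrable_vcond_exp sq)+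
  have "(\<integral>w. p t w \<bullet> d (Suc t) w \<partial>M) = (\<integral>w. p t w \<bullet> (A *v d t w + Ab *v cond_G (d t) w)
      + (p t w \<bullet> (B1 *v v1 t w + Bb1 *v cond_G (v1 t) w) + p t w \<bullet> (B2 *v v2 t w + Bb2 *v cond_G (v2 t) w)) \<partial>M)"
    by (rule Bochner_Integration.integral_cong[OF refl]) (simp add: d_def state.simps inner_add_right algebra_simps)
  also have "\<dots> = (\<integral>w. p t w \<bullet> (A *v d t w + Ab *v cond_G (d t) w) \<partial>M)
      + ((\<integral>w. p t w \<bullet> (B1 *v v1 t w + Bb1 *v cond_G (v1 t) w) \<partial>M)
        + (\<integral>w. p t w \<bullet> (B2 *v v2 t w + Bb2 *v cond_G (v2 t) w) \<partial>M))"
    using int by (simp only: Bochner_Integration.integral_add Bochner_Integration.integrable_add)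
  finally show ?thesis
    using integral_inner_adjoint[OF ae_F_measurable_response[OF adapted sq, folded d_def] d[of "Suc t"]]
    by simp
qed

lemma integral_grad1_inner:
  assumes v: "square_integrable M v"
  shows "(\<integral>w. grad1 s w \<bullet> v w \<partial>M) = (\<integral>w. p s w \<bullet> (B1 *v v w + Bb1 *v cond_G v w) \<partial>M)
    + 2 * (\<integral>w. (R1 *v u1 s w + Rb1 *v cond_G (u1 s) w) \<bullet> v w \<partial>M)"
proof -
  note p = discounted_L2_square_integrable[OF discounted_L2_p, of s]
    and u = discounted_L2_square_integrable[OF discounted_L2_u1, of s]
  have "integrable M (\<lambda>w. (transpose B1 *v p s w + transpose Bb1 *v cond_G (p s) w) \<bullet> v w)"
    "integrable M (\<lambda>w. (R1 *v u1 s w + Rb1 *v cond_G (u1 s) w) \<bullet> v w)"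
    by (intro integrable_inner_square_integrable square_integrable_add square_integrable_matrix_vector_mult
        G.square_integrable_vcond_exp p u v)+
  moreover have "(\<integral>w. grad1 s w \<bullet> v w \<partial>M)
      = (\<integral>w. (transpose B1 *v p s w + transpose Bb1 *v cond_G (p s) w) \<bullet> v w
        + 2 * ((R1 *v u1 s w + Rb1 *v cond_G (u1 s) w) \<bullet> v w) \<partial>M)"
    by (rule Bochner_Integration.integral_cong[OF refl]) (simp add: grad1_def inner_add_left algebra_simps)
  ultimately show ?thesis
    by (simp add: integral_inner_mean_field_transpose[OF p v])
qed

lemma integral_grad2_inner:
  assumes v: "square_integrable M v"
  shows "(\<integral>w. grad2 s w \<bullet> v w \<partial>M) = (\<integral>w. p s w \<bullet> (B2 *v v w + Bb2 *v cond_G v w) \<partial>M)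
    - 2 * (\<integral>w. (R2 *v u2 s w + Rb2 *v cond_G (u2 s) w) \<bullet> v w \<partial>M)"
proof -
  note p = discounted_L2_square_integrable[OF discounted_L2_p, of s]
    and u = discounted_L2_square_integrable[OF discounted_L2_u2, of s]
  have "integrable M (\<lambda>w. (transpose B2 *v p s w + transpose Bb2 *v cond_G (p s) w) \<bullet> v w)"
    "integrable M (\<lambda>w. (R2 *v u2 s w + Rb2 *v cond_G (u2 s) w) \<bullet> v w)"
    by (intro integrable_inner_square_integrable square_integrable_add square_integrable_matrix_vector_mult
        G.square_integrable_vcond_exp p u v)+
  moreover have "(\<integral>w. grad2 s w \<bullet> v w \<partial>M)
      = (\<integral>w. (transpose B2 *v p s w + transpose Bb2 *v cond_G (p s) w) \<bullet> v w
        - 2 * ((R2 *v u2 s w + Rb2 *v cond_G (u2 s) w) \<bullet> v w) \<partial>M)"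
    by (rule Bochner_Integration.integral_cong[OF refl])
      (simp add: grad2_def inner_add_left inner_diff_left algebra_simps)
  ultimately show ?thesis
    by (simp add: integral_inner_mean_field_transpose[OF p v])
qed

text \<open>Summed against the discount, the adjoint steps telescope: the boundary term vanishes and
  only the impulse itself survives.\<close>

lemma sums_state_cost_response_impulse:
  fixes s :: nat and v1 v2 :: "'w \<Rightarrow> real^'l"
  assumes adapted: "v1 \<in> borel_measurable (F s)" "v2 \<in> borel_measurable (F s)"
    and sq: "square_integrable M v1" "square_integrable M v2"
  defines "d \<equiv> response (impulse s v1) (impulse s v2)"
  shows "(\<lambda>t. \<gamma>^t * (2 * (\<integral>w. (Q *v X eps u1 u2 t w + Qb *v cond_G (X eps u1 u2 t) w) \<bullet> d t w \<partial>M)))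
    sums (\<gamma>^s * ((\<integral>w. p s w \<bullet> (B1 *v v1 w + Bb1 *v cond_G v1 w) \<partial>M)
      + (\<integral>w. p s w \<bullet> (B2 *v v2 w + Bb2 *v cond_G v2 w) \<partial>M)))"
proof -
  let ?v1 = "impulse s v1" and ?v2 = "impulse s v2"
  have adapted': "?v1 t \<in> borel_measurable (F t)" "?v2 t \<in> borel_measurable (F t)" for t
    using adapted by (auto simp: impulse_def)
  have sq': "square_integrable M (?v1 t)" "square_integrable M (?v2 t)" for t
    using sq by (auto simp: impulse_def square_integrable_zero)
  have [measurable]: "p t \<in> borel_measurable M" for t
    by (rule discounted_L2_measurable[OF discounted_L2_p])
  have d0: "d 0 = (\<lambda>w. 0)" by (simp add: d_def)
  define Y where "Y t = (\<integral>w. p t w \<bullet> (A *v d t w + Ab *v cond_G (d t) w) \<partial>M)" for t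
  define W where "W t = (\<integral>w. p t w \<bullet> (B1 *v ?v1 t w + Bb1 *v cond_G (?v1 t) w) \<partial>M)
    + (\<integral>w. p t w \<bullet> (B2 *v ?v2 t w + Bb2 *v cond_G (?v2 t) w) \<partial>M)" for t
  have "(\<lambda>t. \<gamma>^t * (2 * (\<integral>w. (Q *v X eps u1 u2 t w + Qb *v cond_G (X eps u1 u2 t) w) \<bullet> d t w \<partial>M)))
      sums (\<gamma>^s * W s)"
  proof (rule discounted_telescoping_sums)
    show "Y t + W t = \<gamma> * (Y (Suc t)
        + 2 * (\<integral>w. (Q *v X eps u1 u2 (Suc t) w + Qb *v cond_G (X eps u1 u2 (Suc t)) w) \<bullet> d (Suc t) w \<partial>M))" for t
      unfolding Y_def W_def d_def by (rule integral_adjoint_response_step[OF adapted' sq'])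
    have "Y 0 = (\<integral>w. 0 \<partial>M)"
      unfolding Y_def d0 by (rule integral_cong_AE) (use G.vcond_exp_zero[where 'k='d] in auto)
    then show "Y 0 = 0" by simp
    show "(\<lambda>n. \<gamma>^n * Y n) \<longlonglongrightarrow> 0"
      unfolding Y_def d_def
      by (intro discounted_inner_tendsto_zero discounted_L2_p discounted_L2_add discounted_L2_matrix_vector_mult
          discounted_L2_vcond_exp discounted_L2_response_impulse sq)
    show "W t = 0" if "t \<noteq> s" for t
    proof -
      have "W t = (\<integral>w. 0 \<partial>M) + (\<integral>w. 0 \<partial>M)"
        unfolding W_def
        by (intro arg_cong2[where f="(+)"] integral_cong_AE) (use that G.vcond_exp_zero[where 'k='l] in auto)
      then show ?thesis by simp
    qed
  qed (simp add: d0)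
  then show ?thesis by (simp add: W_def)
qed

lemma sums_cost_bilinear_impulse:
  fixes v1 v2 :: "'w \<Rightarrow> real^'l"
  assumes adapted: "v1 \<in> borel_measurable (F s)" "v2 \<in> borel_measurable (F s)"
    and sq: "square_integrable M v1" "square_integrable M v2"
  shows "(\<lambda>t. \<gamma>^t * (\<integral>w. cost_bilinear (X eps u1 u2 t) (u1 t) (u2 t)
      (response (impulse s v1) (impulse s v2) t) (impulse s v1 t) (impulse s v2 t) w \<partial>M))
    sums (\<gamma>^s / 2 * ((\<integral>w. grad1 s w \<bullet> v1 w \<partial>M) + (\<integral>w. grad2 s w \<bullet> v2 w \<partial>M)))"
proof -
  let ?x = "X eps u1 u2" and ?v1 = "impulse s v1" and ?v2 = "impulse s v2"
  define d where "d = response ?v1 ?v2"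
  define S where "S t = 2 * (\<integral>w. (Q *v ?x t w + Qb *v cond_G (?x t) w) \<bullet> d t w \<partial>M)" for t
  define V where "V t = (\<integral>w. (R1 *v u1 t w + Rb1 *v cond_G (u1 t) w) \<bullet> ?v1 t w \<partial>M)
    - (\<integral>w. (R2 *v u2 t w + Rb2 *v cond_G (u2 t) w) \<bullet> ?v2 t w \<partial>M)" for t
  define P where "P = (\<integral>w. p s w \<bullet> (B1 *v v1 w + Bb1 *v cond_G v1 w) \<partial>M)
    + (\<integral>w. p s w \<bullet> (B2 *v v2 w + Bb2 *v cond_G v2 w) \<partial>M)"
  have "(\<lambda>t. \<gamma>^t * S t) sums (\<gamma>^s * P)"
    unfolding S_def d_def P_def by (rule sums_state_cost_response_impulse[OF adapted sq])
  moreover have "(\<lambda>t. \<gamma>^t * V t) sums (\<gamma>^s * V s)"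
  proof -
    have "(\<lambda>t. \<gamma>^t * V t) = (\<lambda>t. if t = s then \<gamma>^s * V s else 0)"
      by (auto simp: V_def)
    then show ?thesis using sums_single[of s "\<lambda>_. \<gamma>^s * V s"] by simp
  qed
  ultimately have sums: "(\<lambda>t. \<gamma>^t * (S t / 2 + V t)) sums (\<gamma>^s * P / 2 + \<gamma>^s * V s)"
    by (simp add: distrib_left sums_add sums_divide)
  have cost: "(\<integral>w. cost_bilinear (?x t) (u1 t) (u2 t) (d t) (?v1 t) (?v2 t) w \<partial>M) = S t / 2 + V t" for t
    unfolding S_def V_def
    by (subst integral_cost_bilinear)
      (use discounted_L2_square_integrable[OF discounted_L2_state] discounted_L2_square_integrable[OF discounted_L2_u1]
        discounted_L2_square_integrable[OF discounted_L2_u2] square_integrable_response sq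
        in \<open>auto simp: d_def impulse_def square_integrable_zero\<close>)
  have "\<gamma>^s * P / 2 + \<gamma>^s * V s
      = \<gamma>^s / 2 * ((\<integral>w. grad1 s w \<bullet> v1 w \<partial>M) + (\<integral>w. grad2 s w \<bullet> v2 w \<partial>M))"
    unfolding integral_grad1_inner[OF sq(1)] integral_grad2_inner[OF sq(2)] P_def V_def
    by (simp add: algebra_simps)
  with sums show ?thesis
    unfolding cost[symmetric] d_def by simp
qed

lemma J_add_impulse:
  fixes v1 v2 :: "'w \<Rightarrow> real^'l"
  assumes adapted: "v1 \<in> borel_measurable (F s)" "v2 \<in> borel_measurable (F s)"
    and sq: "square_integrable M v1" "square_integrable M v2"
  shows "J eps (\<lambda>t w. u1 t w + c *\<^sub>R impulse s v1 t w) (\<lambda>t w. u2 t w + c *\<^sub>R impulse s v2 t w)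
    = J eps u1 u2 + c * (\<gamma>^s * ((\<integral>w. grad1 s w \<bullet> v1 w \<partial>M) + (\<integral>w. grad2 s w \<bullet> v2 w \<partial>M)))
      + c\<^sup>2 * J (\<lambda>t w. 0) (impulse s v1) (impulse s v2)"
  using J_add_scaleR[OF eps_measurable discounted_L2_u1 discounted_L2_u2 discounted_L2_impulse[OF sq(1)]
      discounted_L2_impulse[OF sq(2)] discounted_L2_state discounted_L2_response_impulse[OF sq]]
    sums_unique[OF sums_cost_bilinear_impulse[OF assms]]
  by simp

lemma integral_grad1_inner_eq_0:
  assumes nash: "\<forall>v1. proc_class M F \<gamma> v1 \<longrightarrow> J eps u1 u2 \<le> J eps v1 u2"
    and v: "v \<in> borel_measurable (F s)" "square_integrable M v"
  shows "(\<integral>w. grad1 s w \<bullet> v w \<partial>M) = 0"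
proof -
  have zero: "(\<lambda>w. 0) \<in> borel_measurable (F s)" "square_integrable M (\<lambda>w. 0 :: real^'l)"
    by (simp_all add: square_integrable_zero)
  have "0 \<le> c * (\<gamma>^s * (\<integral>w. grad1 s w \<bullet> v w \<partial>M)) + c\<^sup>2 * J (\<lambda>t w. 0) (impulse s v) (\<lambda>t w. 0)" for c
  proof -
    have "proc_class M F \<gamma> (\<lambda>t w. u1 t w + c *\<^sub>R impulse s v t w)"
    proof (rule proc_classI_discounted_L2)
      show "discounted_L2 (\<lambda>t w. u1 t w + c *\<^sub>R impulse s v t w)"
        by (intro discounted_L2_add discounted_L2_scaleR discounted_L2_u1 discounted_L2_impulse v)
      show "(\<lambda>w. u1 t w + c *\<^sub>R impulse s v t w) \<in> borel_measurable (F t)" for t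
        using adapted_u1[of t] v(1) by (cases "t = s") simp_all
    qed
    then have "J eps u1 u2 \<le> J eps (\<lambda>t w. u1 t w + c *\<^sub>R impulse s v t w) u2"
      using nash by blast
    then show ?thesis using J_add_impulse[OF v(1) zero(1) v(2) zero(2), of c] by simp
  qed
  from nonneg_quadratic_imp_linear_zero[OF this] show ?thesis using discount_pos by simp
qed

lemma integral_grad2_inner_eq_0:
  assumes nash: "\<forall>v2. proc_class M F \<gamma> v2 \<longrightarrow> J eps u1 v2 \<le> J eps u1 u2"
    and v: "v \<in> borel_measurable (F s)" "square_integrable M v"
  shows "(\<integral>w. grad2 s w \<bullet> v w \<partial>M) = 0"
proof -
  have zero: "(\<lambda>w. 0) \<in> borel_measurable (F s)" "square_integrable M (\<lambda>w. 0 :: real^'l)"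
    by (simp_all add: square_integrable_zero)
  have "0 \<le> c * - (\<gamma>^s * (\<integral>w. grad2 s w \<bullet> v w \<partial>M)) + c\<^sup>2 * - J (\<lambda>t w. 0) (\<lambda>t w. 0) (impulse s v)" for c
  proof -
    have "proc_class M F \<gamma> (\<lambda>t w. u2 t w + c *\<^sub>R impulse s v t w)"
    proof (rule proc_classI_discounted_L2)
      show "discounted_L2 (\<lambda>t w. u2 t w + c *\<^sub>R impulse s v t w)"
        by (intro discounted_L2_add discounted_L2_scaleR discounted_L2_u2 discounted_L2_impulse v)
      show "(\<lambda>w. u2 t w + c *\<^sub>R impulse s v t w) \<in> borel_measurable (F t)" for t
        using adapted_u2[of t] v(1) by (cases "t = s") simp_all
    qed
    then have "J eps u1 (\<lambda>t w. u2 t w + c *\<^sub>R impulse s v t w) \<le> J eps u1 u2"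
      using nash by blast
    then have "c * (\<gamma>^s * (\<integral>w. grad2 s w \<bullet> v w \<partial>M)) + c\<^sup>2 * J (\<lambda>t w. 0) (\<lambda>t w. 0) (impulse s v) \<le> 0"
      using J_add_impulse[OF zero(1) v(1) zero(2) v(2), of c] by simp
    then show ?thesis by simp
  qed
  from nonneg_quadratic_imp_linear_zero[OF this] show ?thesis using discount_pos by simp
qed

theorem first_order_conditions:
  assumes "\<forall>v2. proc_class M F \<gamma> v2 \<longrightarrow> J eps u1 v2 \<le> J eps u1 u2"
    and "\<forall>v1. proc_class M F \<gamma> v1 \<longrightarrow> J eps u1 u2 \<le> J eps v1 u2"
  shows "AE w in M. grad1 s w = 0" and "AE w in M. grad2 s w = 0"
  using AE_eq_0_if_integral_inner_eq_0[OF square_integrable_grad1 ae_F_measurable_grad1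
      integral_grad1_inner_eq_0[OF assms(2)]]
    AE_eq_0_if_integral_inner_eq_0[OF square_integrable_grad2 ae_F_measurable_grad2
      integral_grad2_inner_eq_0[OF assms(1)]]
  by auto

end

section \<open>The product space\<close>

lemma subalgebra_F0: "subalgebra (M0 \<Otimes>\<^sub>M M1) (F0 M0 M1)"
proof -
  have "fst \<in> measurable (M0 \<Otimes>\<^sub>M M1) M0" by simp
  then have "sets (vimage_algebra (space (M0 \<Otimes>\<^sub>M M1)) fst M0) \<subseteq> sets (M0 \<Otimes>\<^sub>M M1)"
    by (simp add: measurable_iff_sets)
  then show ?thesis unfolding subalgebra_def F0_def by simp
qed

lemma real_cond_exp_F0:
  fixes f :: "'a \<times> 'b \<Rightarrow> real"
  assumes "prob_space M0" "prob_space M1" and f: "integrable (M0 \<Otimes>\<^sub>M M1) f"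
  shows "AE w in M0 \<Otimes>\<^sub>M M1. real_cond_exp (M0 \<Otimes>\<^sub>M M1) (F0 M0 M1) f w = (\<integral>y. f (fst w, y) \<partial>M1)"
proof -
  interpret P: pair_prob_space M0 M1
    using assms(1,2) by (simp add: pair_prob_space_def pair_sigma_finite_def prob_space_imp_sigma_finite)
  interpret F0: finite_measure_subalgebra "M0 \<Otimes>\<^sub>M M1" "F0 M0 M1"
    by unfold_locales (rule subalgebra_F0)
  define h where "h x = (\<integral>y. f (x, y) \<partial>M1)" for x
  have [measurable]: "f \<in> borel_measurable (M0 \<Otimes>\<^sub>M M1)" using f by auto
  have h_M0 [measurable]: "h \<in> borel_measurable M0" unfolding h_def by measurable
  have h_int: "integrable M0 h" unfolding h_def by (rule P.integrable_fst'[OF f])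
  have distr_fst: "distr (M0 \<Otimes>\<^sub>M M1) M0 fst = M0" by (rule P.M2.distr_pair_fst)
  then have g_int: "integrable (M0 \<Otimes>\<^sub>M M1) (\<lambda>w. h (fst w))"
    using integrable_distr_eq[of fst "M0 \<Otimes>\<^sub>M M1" M0 h] h_int by simp
  have g_F0: "(\<lambda>w. h (fst w)) \<in> borel_measurable (F0 M0 M1)"
    unfolding F0_def
    by (rule measurable_comp[OF measurable_vimage_algebra1 h_M0, unfolded comp_def])
      (auto simp: space_pair_measure)
  show ?thesis unfolding h_def[symmetric]
  proof (rule F0.real_cond_exp_charact[OF _ f g_int g_F0])
    fix A assume "A \<in> sets (F0 M0 M1)"
    moreover have "fst \<in> space (M0 \<Otimes>\<^sub>M M1) \<rightarrow> space M0" by (auto simp: space_pair_measure)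
    ultimately obtain A0 where A0 [measurable]: "A0 \<in> sets M0" and A: "A = fst -` A0 \<inter> space (M0 \<Otimes>\<^sub>M M1)"
      unfolding F0_def by (auto simp: sets_vimage_algebra2)
    have indicator: "indicator A w = (indicator A0 (fst w) :: real)" if "w \<in> space (M0 \<Otimes>\<^sub>M M1)" for w
      using that unfolding A by (auto simp: indicator_def)
    have int: "integrable (M0 \<Otimes>\<^sub>M M1) (\<lambda>w. indicator A0 (fst w) * f w)"
    proof (rule Bochner_Integration.integrable_cong[THEN iffD1, OF refl _
          integrable_mult_indicator[OF _ f, of "A0 \<times> space M1"]])
      show "indicator (A0 \<times> space M1) w *\<^sub>R f w = indicator A0 (fst w) * f w"
        if "w \<in> space (M0 \<Otimes>\<^sub>M M1)" for w
        using that by (auto simp: indicator_def space_pair_measure)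
    qed simp
    have "(\<integral>w\<in>A. f w \<partial>(M0 \<Otimes>\<^sub>M M1)) = (\<integral>w. indicator A0 (fst w) * f w \<partial>(M0 \<Otimes>\<^sub>M M1))"
      unfolding set_lebesgue_integral_def by (rule Bochner_Integration.integral_cong) (simp_all add: indicator)
    also have "\<dots> = (\<integral>x. indicator A0 x * h x \<partial>M0)"
      using P.integral_fst'[OF int] by (simp add: h_def)
    also have "\<dots> = (\<integral>w. indicator A0 (fst w) * h (fst w) \<partial>(M0 \<Otimes>\<^sub>M M1))"
      using integral_distr[of fst "M0 \<Otimes>\<^sub>M M1" M0 "\<lambda>x. indicator A0 x * h x"] distr_fst by simp
    also have "\<dots> = (\<integral>w\<in>A. h (fst w) \<partial>(M0 \<Otimes>\<^sub>M M1))"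
      unfolding set_lebesgue_integral_def by (rule Bochner_Integration.integral_cong) (simp_all add: indicator)
    finally show "(\<integral>w\<in>A. f w \<partial>(M0 \<Otimes>\<^sub>M M1)) = (\<integral>w\<in>A. h (fst w) \<partial>(M0 \<Otimes>\<^sub>M M1))" .
  qed
qed

lemma borel_measurable_integral_snd_subalgebra:
  fixes f :: "'a \<times> 'b \<Rightarrow> real"
  assumes "finite_measure M1" "subalgebra M1 N1" and f: "f \<in> borel_measurable (N0 \<Otimes>\<^sub>M N1)"
  shows "(\<lambda>x. \<integral>y. f (x, y) \<partial>M1) \<in> borel_measurable N0"
proof -
  define N1' where "N1' = restr_to_subalg M1 N1"
  interpret N1': finite_measure N1'
    unfolding N1'_def by (rule finite_measure_restr_to_subalg[OF assms(2,1)])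
  have "sets N1' = sets N1" unfolding N1'_def by (rule sets_restr_to_subalg[OF assms(2)])
  then have "(\<lambda>(x, y). f (x, y)) \<in> borel_measurable (N0 \<Otimes>\<^sub>M N1')"
    using f by (simp add: measurable_cong_sets[OF sets_pair_measure_cong[OF refl \<open>sets N1' = sets N1\<close>] refl])
  then have meas: "(\<lambda>x. \<integral>y. f (x, y) \<partial>N1') \<in> borel_measurable N0"
    by (rule N1'.borel_measurable_lebesgue_integral)
  have "(\<integral>y. f (x, y) \<partial>N1') = (\<integral>y. f (x, y) \<partial>M1)" if "x \<in> space N0" for x
    unfolding N1'_def
    by (rule integral_subalgebra2[OF assms(2) measurable_Pair2[OF f that]])
  then show ?thesis
    by (rule measurable_cong[THEN iffD1, OF _ meas])
qed

definition noise_sigma :: "'a measure \<Rightarrow> (nat \<Rightarrow> 'a \<Rightarrow> real^'d) \<Rightarrow> nat \<Rightarrow> 'a measure" where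
  "noise_sigma M e t = sigma (space M) (\<Union>s\<in>{..t}. {e s -` B \<inter> space M | B. B \<in> sets borel})"

lemma
  assumes "\<And>s. e s \<in> borel_measurable M"
  shows subalgebra_noise_sigma: "subalgebra M (noise_sigma M e t)"
    and space_noise_sigma: "space (noise_sigma M e t) = space M"
    and sets_noise_sigma: "sets (noise_sigma M e t)
      = sigma_sets (space M) (\<Union>s\<in>{..t}. {e s -` B \<inter> space M | B. B \<in> sets borel})"
proof -
  show sets: "sets (noise_sigma M e t) = sigma_sets (space M) (\<Union>s\<in>{..t}. {e s -` B \<inter> space M | B. B \<in> sets borel})"
    unfolding noise_sigma_def by (rule sets_measure_of) auto
  show "space (noise_sigma M e t) = space M"
    unfolding noise_sigma_def by (rule space_measure_of_conv)
  moreover have "sets (noise_sigma M e t) \<subseteq> sets M"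
    unfolding sets using assms by (intro sets.sigma_sets_subset) (auto intro: measurable_sets)
  ultimately show "subalgebra M (noise_sigma M e t)" by (simp add: subalgebra_def)
qed

context
  fixes M0 :: "'a measure" and M1 :: "'b measure"
    and e0 :: "nat \<Rightarrow> 'a \<Rightarrow> real^'d" and e1 :: "nat \<Rightarrow> 'b \<Rightarrow> real^'d"
  assumes e0 [measurable]: "\<And>t. e0 t \<in> borel_measurable M0"
    and e1 [measurable]: "\<And>t. e1 t \<in> borel_measurable M1"
begin

definition filt_generators :: "nat \<Rightarrow> ('a \<times> 'b) set set" where
  "filt_generators t =
    (\<Union>s\<in>{..t}. {(\<lambda>w. e0 s (fst w)) -` B \<inter> space (M0 \<Otimes>\<^sub>M M1) | B. B \<in> sets borel}) \<union>
    (\<Union>s\<in>{..t}. {(\<lambda>w. e1 s (snd w)) -` B \<inter> space (M0 \<Otimes>\<^sub>M M1) | B. B \<in> sets borel})"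

lemma filt_eq: "filt M0 M1 e0 e1 t = sigma (space (M0 \<Otimes>\<^sub>M M1)) (filt_generators t)"
  unfolding filt_def filt_generators_def ..

lemma space_filt: "space (filt M0 M1 e0 e1 t) = space (M0 \<Otimes>\<^sub>M M1)"
  unfolding filt_eq by (rule space_measure_of_conv)

lemma sets_filt: "sets (filt M0 M1 e0 e1 t) = sigma_sets (space (M0 \<Otimes>\<^sub>M M1)) (filt_generators t)"
  unfolding filt_eq by (rule sets_measure_of) (auto simp: filt_generators_def)

lemma subalgebra_filt: "subalgebra (M0 \<Otimes>\<^sub>M M1) (filt M0 M1 e0 e1 t)"
proof -
  have "(\<lambda>w. e0 s (fst w)) \<in> borel_measurable (M0 \<Otimes>\<^sub>M M1)"
    "(\<lambda>w. e1 s (snd w)) \<in> borel_measurable (M0 \<Otimes>\<^sub>M M1)" for s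
    by measurable
  then have "filt_generators t \<subseteq> sets (M0 \<Otimes>\<^sub>M M1)"
    unfolding filt_generators_def by (auto intro: measurable_sets)
  then show ?thesis
    unfolding subalgebra_def sets_filt space_filt using sets.sigma_sets_subset[of "filt_generators t"] by simp
qed

lemma sets_filt_mono: "sets (filt M0 M1 e0 e1 t) \<subseteq> sets (filt M0 M1 e0 e1 (Suc t))"
proof -
  have "filt_generators t \<subseteq> filt_generators (Suc t)"
    unfolding filt_generators_def by (intro Un_mono UN_mono) auto
  then show ?thesis unfolding sets_filt by (rule sigma_sets_mono')
qed

lemma sets_filt_subset_pair:
  "sets (filt M0 M1 e0 e1 t) \<subseteq> sets (noise_sigma M0 e0 t \<Otimes>\<^sub>M noise_sigma M1 e1 t)"
proof -
  have "X \<in> sets (noise_sigma M0 e0 t \<Otimes>\<^sub>M noise_sigma M1 e1 t)" if "X \<in> filt_generators t" for X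
  proof -
    from that consider
        s B where "s \<le> t" "B \<in> sets borel" "X = (\<lambda>w. e0 s (fst w)) -` B \<inter> space (M0 \<Otimes>\<^sub>M M1)"
      | s B where "s \<le> t" "B \<in> sets borel" "X = (\<lambda>w. e1 s (snd w)) -` B \<inter> space (M0 \<Otimes>\<^sub>M M1)"
      unfolding filt_generators_def by auto
    then show ?thesis
    proof cases
      case 1
      then have "X = (e0 s -` B \<inter> space M0) \<times> space M1" by (auto simp: space_pair_measure)
      moreover from 1 have "e0 s -` B \<inter> space M0 \<in> sets (noise_sigma M0 e0 t)"
        by (auto simp: sets_noise_sigma[OF e0])
      moreover have "space M1 \<in> sets (noise_sigma M1 e1 t)"
        using sets.top[of "noise_sigma M1 e1 t"] by (simp add: space_noise_sigma[OF e1])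
      ultimately show ?thesis by (simp add: pair_measureI)
    next
      case 2
      then have "X = space M0 \<times> (e1 s -` B \<inter> space M1)" by (auto simp: space_pair_measure)
      moreover from 2 have "e1 s -` B \<inter> space M1 \<in> sets (noise_sigma M1 e1 t)"
        by (auto simp: sets_noise_sigma[OF e1])
      moreover have "space M0 \<in> sets (noise_sigma M0 e0 t)"
        using sets.top[of "noise_sigma M0 e0 t"] by (simp add: space_noise_sigma[OF e0])
      ultimately show ?thesis by (simp add: pair_measureI)
    qed
  qed
  moreover have "space (M0 \<Otimes>\<^sub>M M1) = space (noise_sigma M0 e0 t \<Otimes>\<^sub>M noise_sigma M1 e1 t)"
    by (simp add: space_pair_measure space_noise_sigma[OF e0] space_noise_sigma[OF e1])
  ultimately show ?thesis
    unfolding sets_filt by (metis sets.sigma_sets_subset subsetI)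
qed

lemma measurable_fst_filt: "fst \<in> measurable (filt M0 M1 e0 e1 t) (noise_sigma M0 e0 t)"
  unfolding noise_sigma_def
proof (rule measurable_measure_of)
  show "fst \<in> space (filt M0 M1 e0 e1 t) \<rightarrow> space M0"
    by (auto simp: space_filt space_pair_measure)
  fix Y assume "Y \<in> (\<Union>s\<in>{..t}. {e0 s -` B \<inter> space M0 | B. B \<in> sets borel})"
  then obtain s B where sB: "s \<le> t" "B \<in> sets borel" "Y = e0 s -` B \<inter> space M0" by auto
  then have "fst -` Y \<inter> space (filt M0 M1 e0 e1 t) = (\<lambda>w. e0 s (fst w)) -` B \<inter> space (M0 \<Otimes>\<^sub>M M1)"
    by (auto simp: space_filt space_pair_measure)
  also have "\<dots> \<in> filt_generators t"
    unfolding filt_generators_def using sB by auto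
  finally have "fst -` Y \<inter> space (filt M0 M1 e0 e1 t) \<in> filt_generators t" .
  then show "fst -` Y \<inter> space (filt M0 M1 e0 e1 t) \<in> sets (filt M0 M1 e0 e1 t)"
    unfolding sets_filt by auto
qed auto

lemma real_cond_exp_F0_filt:
  fixes f :: "'a \<times> 'b \<Rightarrow> real"
  assumes "prob_space M0" "prob_space M1"
    and f: "f \<in> borel_measurable (filt M0 M1 e0 e1 t)" "integrable (M0 \<Otimes>\<^sub>M M1) f"
  shows "\<exists>g. g \<in> borel_measurable (filt M0 M1 e0 e1 t) \<and>
    (AE w in M0 \<Otimes>\<^sub>M M1. real_cond_exp (M0 \<Otimes>\<^sub>M M1) (F0 M0 M1) f w = g w)"
proof (intro exI conjI)
  have "f \<in> borel_measurable (noise_sigma M0 e0 t \<Otimes>\<^sub>M noise_sigma M1 e1 t)"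
    using measurable_mono[of borel borel "filt M0 M1 e0 e1 t" "noise_sigma M0 e0 t \<Otimes>\<^sub>M noise_sigma M1 e1 t"]
      sets_filt_subset_pair f(1)
    by (auto simp: space_filt space_pair_measure space_noise_sigma[OF e0] space_noise_sigma[OF e1])
  moreover have "finite_measure M1" using assms(2) by (simp add: prob_space_def)
  moreover have "subalgebra M1 (noise_sigma M1 e1 t)" by (rule subalgebra_noise_sigma) (rule e1)
  ultimately have "(\<lambda>x. \<integral>y. f (x, y) \<partial>M1) \<in> borel_measurable (noise_sigma M0 e0 t)"
    by (intro borel_measurable_integral_snd_subalgebra)
  then show "(\<lambda>w. \<integral>y. f (fst w, y) \<partial>M1) \<in> borel_measurable (filt M0 M1 e0 e1 t)"
    using measurable_comp[OF measurable_fst_filt] by (auto simp: comp_def)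
  show "AE w in M0 \<Otimes>\<^sub>M M1. real_cond_exp (M0 \<Otimes>\<^sub>M M1) (F0 M0 M1) f w = (\<integral>y. f (fst w, y) \<partial>M1)"
    by (rule real_cond_exp_F0[OF assms(1,2) f(2)])
qed

lemma mean_field_model_product:
  assumes "prob_space M0" "prob_space M1" "0 < \<gamma>" "\<gamma> \<le> 1"
  shows "mean_field_model (M0 \<Otimes>\<^sub>M M1) (F0 M0 M1) (filt M0 M1 e0 e1) \<gamma>"
proof (rule mean_field_model.intro)
  show "prob_space (M0 \<Otimes>\<^sub>M M1)" by (rule prob_space_pair[OF assms(1,2)])
  show "mean_field_model_axioms (M0 \<Otimes>\<^sub>M M1) (F0 M0 M1) (filt M0 M1 e0 e1) \<gamma>"
  proof
    fix t and f :: "'a \<times> 'b \<Rightarrow> real"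
    assume "f \<in> borel_measurable (filt M0 M1 e0 e1 t)" "integrable (M0 \<Otimes>\<^sub>M M1) f"
    then show "\<exists>g. g \<in> borel_measurable (filt M0 M1 e0 e1 t) \<and>
        (AE w in M0 \<Otimes>\<^sub>M M1. real_cond_exp (M0 \<Otimes>\<^sub>M M1) (F0 M0 M1) f w = g w)"
      by (rule real_cond_exp_F0_filt[OF assms(1,2)])
  qed (use assms subalgebra_F0 subalgebra_filt sets_filt_mono in auto)
qed

end

theorem mainTheorem3:
  fixes M0 :: "'a measure" and M1 :: "'b measure"
    and e0 :: "nat \<Rightarrow> 'a \<Rightarrow> real^'d" and e1 :: "nat \<Rightarrow> 'b \<Rightarrow> real^'d"
    and \<gamma> :: real
    and A Ab Q Qb :: "real^'d^'d"
    and B1 Bb1 B2 Bb2 :: "real^'l^'d"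
    and R1 Rb1 R2 Rb2 :: "real^'l^'l"
    and u1 u2 :: "nat \<Rightarrow> 'a \<times> 'b \<Rightarrow> real^'l"
    and p :: "nat \<Rightarrow> 'a \<times> 'b \<Rightarrow> real^'d"
  defines "M \<equiv> M0 \<Otimes>\<^sub>M M1"
    and "G \<equiv> F0 M0 M1"
    and "F \<equiv> filt M0 M1 e0 e1"
    and "X \<equiv> (\<lambda>v1 v2. state (M0 \<Otimes>\<^sub>M M1) (F0 M0 M1) (\<lambda>t w. e0 t (fst w) + e1 t (snd w)) A Ab B1 Bb1 B2 Bb2 v1 v2)"
    and "J \<equiv> (\<lambda>v1 v2. \<integral>w. (\<Sum>t. \<gamma>^t * run_cost (M0 \<Otimes>\<^sub>M M1) (F0 M0 M1) Q Qb R1 Rb1 R2 Rb2 ((\<lambda>v1 v2. state (M0 \<Otimes>\<^sub>M M1) (F0 M0 M1) (\<lambda>t w. e0 t (fst w) + e1 t (snd w)) A Ab B1 Bb1 B2 Bb2 v1 v2) v1 v2 t) (v1 t) (v2 t) w) \<partial>(M0 \<Otimes>\<^sub>M M1))"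
  assumes gamma: "0 < \<gamma>" "\<gamma> \<le> 1"
    and noise0: "noise_assm M0 e0" and noise1: "noise_assm M1 e1"
    and symQ: "symm Q" "symm Qb"
    and symR: "symm R1" "symm Rb1" "symm R2" "symm Rb2"
    and posR: "pos_def R1" "pos_def (R1 + Rb1)" "pos_def R2" "pos_def (R2 + Rb2)"
    and normA: "\<gamma> * (mat_norm A)\<^sup>2 < 1" "\<gamma> * (mat_norm (A + Ab))\<^sup>2 < 1"
    and adm: "proc_class M F \<gamma> u1" "proc_class M F \<gamma> u2" "proc_class M F \<gamma> (X u1 u2)"
    and nash: "\<forall>v2. proc_class M F \<gamma> v2 \<longrightarrow> J u1 v2 \<le> J u1 u2"
              "\<forall>v1. proc_class M F \<gamma> v1 \<longrightarrow> J u1 u2 \<le> J v1 u2"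
    and p_X: "proc_class M F \<gamma> p"
    and adjoint: "\<And>t. AE w in M. p t w = \<gamma> *\<^sub>R vcond_exp M (F t)
         (\<lambda>v. transpose A *v p (Suc t) v + 2 *\<^sub>R (Q *v X u1 u2 (Suc t) v)
            + transpose Ab *v vcond_exp M G (p (Suc t)) v
            + 2 *\<^sub>R (Qb *v vcond_exp M G (X u1 u2 (Suc t)) v)) w"
  shows "\<forall>t. (AE w in M. transpose B1 *v p t w + 2 *\<^sub>R (R1 *v u1 t w)
                 + transpose Bb1 *v vcond_exp M G (p t) w + 2 *\<^sub>R (Rb1 *v vcond_exp M G (u1 t) w) = 0)
           \<and> (AE w in M. transpose B2 *v p t w - 2 *\<^sub>R (R2 *v u2 t w)
                 + transpose Bb2 *v vcond_exp M G (p t) w - 2 *\<^sub>R (Rb2 *v vcond_exp M G (u2 t) w) = 0)"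
proof -
  let ?eps = "\<lambda>t w. e0 t (fst w) + e1 t (snd w)"
  have "prob_space M0" and e0: "\<And>t. e0 t \<in> borel_measurable M0"
    using noise0 by (auto simp: noise_assm_def)
  have "prob_space M1" and e1: "\<And>t. e1 t \<in> borel_measurable M1"
    using noise1 by (auto simp: noise_assm_def)
  interpret mean_field_model M G F \<gamma>
    unfolding M_def G_def F_def
    by (rule mean_field_model_product[OF e0 e1 \<open>prob_space M0\<close> \<open>prob_space M1\<close> gamma])
  have eps: "?eps t \<in> borel_measurable M" for t
    unfolding M_def using e0 e1 by measurable
  have X_eq: "X u1 u2 = state M G ?eps A Ab B1 Bb1 B2 Bb2 u1 u2"
    unfolding X_def M_def G_def ..
  interpret E: lq_open_loop M G F \<gamma> A Ab Q Qb B1 Bb1 B2 Bb2 R1 Rb1 R2 Rb2 ?eps u1 u2 p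
    using symQ symR normA eps adm p_X adjoint unfolding X_eq by unfold_locales auto
  have J_eq: "J v1 v2 = E.J ?eps v1 v2" for v1 v2
    unfolding E.J_def unfolding J_def M_def G_def ..
  show ?thesis
    using E.first_order_conditions[OF nash[unfolded J_eq]] unfolding E.grad1_def E.grad2_def by blast
qed

end
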